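(* Let $\mathcal{E}\subset\mathbf{P}^3$ be an elliptic quadric over $\mathbf{F}_q$, i.e. the surface with equation $x_0x_3-Q(x_1,x_2)=0$ for an irreducible quadratic form $Q\in\mathbf{F}_q[x,y]$. For every integer $s$ with $0\le s<q-1$, the evaluation code $C_{\mathcal{E}}(s)$ is permutation equivalent to the extended BCH code $B_0^{ext}(s)$; in particular $C_{\mathcal{E}}(s)$ has parameters $[q^2+1,(s+1)^2,q^2+1-s(q+1)]$.
   Context: For a smooth projective variety $X\subset\mathbf{P}^r$ over $\mathbf{F}_q$ and an integer $s\ge0$, the evaluation code $C_X(s)\subseteq\mathbf{F}_q^n$ is the image of the linear map sending a homogeneous polynomial $f\in\mathbf{F}_q[x_0,\dots,x_r]$ of degree $s$ to $(f(P_1),\dots,f(P_n))$, where $P_1,\dots,P_n$ are the $\mathbf{F}_q$-rational points of $X$ and $f(P)$ is evaluated at the representative of $P$ whose first nonzero coordinate from the left equals $1$. $B^{ext}(s)\subseteq\mathbf{F}_{q^2}^{q^2+1}$ is the $\mathbf{F}_{q^2}$-linear code spanned by the evaluations of the forms $x^{i+qj}y^{(s-i)+q(s-j)}$, $0\le i,j\le s$, at all points of $\mathbf{P}^1(\mathbf{F}_{q^2})$ (each point represented with first nonzero coordinate $1$); $B_0^{ext}(s)=B^{ext}(s)\cap\mathbf{F}_q^{q^2+1}$. Parameters $[n,k,d]$ denote length, dimension, minimum Hamming distance. *)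

theory Defs
  imports Main "HOL-Computational_Algebra.Polynomial" "HOL-Library.Function_Algebras"
begin

definition proj_points :: "nat \<Rightarrow> (nat \<Rightarrow> 'a::field) set" where
  "proj_points r = {x. (\<forall>i>r. x i = 0) \<and> (\<exists>i\<le>r. x i = 1 \<and> (\<forall>j<i. x j = 0))}"

section \<open>Codes: codewords are functions on an index set, zero outside it\<close>

definition res :: "'i set \<Rightarrow> ('i \<Rightarrow> 'a::zero) \<Rightarrow> 'i \<Rightarrow> 'a" where
  "res A f = (\<lambda>x. if x \<in> A then f x else 0)"

definition monomials :: "nat \<Rightarrow> nat \<Rightarrow> (nat \<Rightarrow> nat) set" where
  "monomials r s = {e. (\<forall>i>r. e i = 0) \<and> (\<Sum>i\<le>r. e i) = s}"

definition eval_code :: "nat \<Rightarrow> (nat \<Rightarrow> 'a::field) set \<Rightarrow> nat \<Rightarrow> ((nat \<Rightarrow> 'a) \<Rightarrow> 'a) set" where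
  "eval_code r X s =
     {res X (\<lambda>P. \<Sum>e\<in>monomials r s. a e * (\<Prod>i\<le>r. P i ^ e i)) | a. True}"

definition hweight :: "'i set \<Rightarrow> ('i \<Rightarrow> 'a::zero) \<Rightarrow> nat" where
  "hweight A c = card {x\<in>A. c x \<noteq> 0}"

definition min_dist :: "'i set \<Rightarrow> ('i \<Rightarrow> 'a::zero) set \<Rightarrow> nat" where
  "min_dist A C = Min {hweight A c | c. c \<in> C \<and> c \<noteq> (\<lambda>_. 0)}"

definition code_dim :: "('i \<Rightarrow> 'a::field) set \<Rightarrow> nat" where
  "code_dim C = vector_space.dim (\<lambda>(k::'a) (f::'i \<Rightarrow> 'a) x. k * f x) C"

definition perm_equiv :: "'i set \<Rightarrow> ('i \<Rightarrow> 'a::zero) set \<Rightarrow> 'j set \<Rightarrow> ('j \<Rightarrow> 'a) set \<Rightarrow> bool" where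
  "perm_equiv A C B D \<longleftrightarrow>
     (\<exists>\<sigma>. bij_betw \<sigma> A B \<and> C = (\<lambda>d. res A (d \<circ> \<sigma>)) ` D)"

text \<open>The binary quadratic form Q(x,y) = a x^2 + b x y + c y^2 as an element of F[x][y] = F[x,y]
  (outer variable y, inner variable x).\<close>
definition qform_poly :: "'a::field \<Rightarrow> 'a \<Rightarrow> 'a \<Rightarrow> 'a poly poly" where
  "qform_poly a b c = [: [:0, 0, a:], [:0, b:], [:c:] :]"

definition elliptic_quadric :: "'a::field \<Rightarrow> 'a \<Rightarrow> 'a \<Rightarrow> (nat \<Rightarrow> 'a) set" where
  "elliptic_quadric a b c =
     {P \<in> proj_points 3. P 0 * P 3 - (a * P 1 ^ 2 + b * P 1 * P 2 + c * P 2 ^ 2) = 0}"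

definition Bext :: "nat \<Rightarrow> nat \<Rightarrow> ((nat \<Rightarrow> 'b::field) \<Rightarrow> 'b) set" where
  "Bext q s =
     {res (proj_points 1)
        (\<lambda>P. \<Sum>(i,j)\<in>{0..s}\<times>{0..s}. \<alpha> (i,j) * (P 0 ^ (i + q*j) * P 1 ^ ((s-i) + q*(s-j)))) | \<alpha>. True}"

text \<open>B_0^ext(s) = B^ext(s) \<inter> F_q^(q^2+1), with F_q embedded in F_{q^2} via emb.\<close>
definition Bext0 :: "('a::field \<Rightarrow> 'b::field) \<Rightarrow> nat \<Rightarrow> nat \<Rightarrow> ((nat \<Rightarrow> 'b) \<Rightarrow> 'a) set" where
  "Bext0 emb q s =
     {c. (\<forall>P. P \<notin> proj_points 1 \<longrightarrow> c P = 0) \<and> (emb \<circ> c) \<in> Bext q s}"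

end

theory Submission
  imports Defs "HOL-Library.FuncSet"
begin

(*
  Over F_(q^2) the form factors, Q(x, y) = a (x - theta y)(x - theta' y) with theta' = theta^q
  and theta not in F_q; choose rho with rho^(q+1) = a.  The map
     tau : P^1(F_(q^2)) -> E,   (x : y) |-> (x^(q+1) : X1 : X2 : y^(q+1)),
  where X1 - theta X2 = x^q y / rho, has F_q-rational coordinates, each a BCH form of degree 1,
  and is a bijection (so |E| = q^2 + 1).  Pulling forms of degree s back along tau gives exactly
  the F_q-valued BCH forms of degree s (conversely, coefficients descend from F_(q^2) to F_q with
  an element of trace 1); this is the permutation equivalence, with sigma = tau^-1.  On the
  affine line a BCH form of degree s is a polynomial of degree at most s (q + 1), which bounds
  the number of zeros; the product of s planes x3 = lambda x0 attains the bound.  Finally the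
  F_q-valued BCH words are parametrised bijectively by Hermitian coefficient arrays, so the code
  has q^((s+1)^2) words and dimension (s + 1)^2.
*)

section \<open>Finite fields\<close>

lemma card_roots_le_degree:
  fixes p :: "'c::idom poly"
  assumes "p \<noteq> 0" "degree p \<le> d" "\<And>x. x \<in> A \<Longrightarrow> poly p x = 0"
  shows "card A \<le> d"
proof -
  have "card A \<le> card {x. poly p x = 0}"
    using assms by (intro card_mono) (auto intro: poly_roots_finite)
  also have "\<dots> \<le> degree p" by (rule card_poly_roots_bound) fact
  finally show ?thesis using assms(2) by simp
qed

lemma pow_card_field:
  fixes x :: "'c :: {field,finite}"
  shows "x ^ card (UNIV :: 'c set) = x"
proof (cases "x = 0")
  case False
  have "x * (\<Prod>y\<in>UNIV-{0}. x * y) = x * x ^ (card (UNIV :: 'c set) - 1) * \<Prod>(UNIV-{0})"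
    by (simp add: prod.distrib mult_ac)
  also have "x * x ^ (card (UNIV :: 'c set) - 1) = x ^ Suc (card (UNIV :: 'c set) - 1)"
    by (subst power_Suc) auto
  also have "Suc (card (UNIV :: 'c set) - 1) = card (UNIV :: 'c set)"
    using finite_UNIV_card_ge_0[where ?'a = 'c] by simp
  also have "(\<Prod>y\<in>UNIV-{0}. x * y) = (\<Prod>y\<in>UNIV-{0}. y)"
    by (rule prod.reindex_bij_witness[of _ "\<lambda>y. y / x" "\<lambda>y. x * y"]) (use False in auto)
  finally show ?thesis
    by simp
qed (use finite_UNIV_card_ge_0[where ?'a = 'c] in auto)

lemma card_field_ge2: "card (UNIV :: 'c :: {field,finite} set) \<ge> 2"
proof -
  have "card {0,1::'c} \<le> card (UNIV :: 'c set)" by (intro card_mono) auto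
  thus ?thesis by simp
qed

text \<open>The binomial coefficients (|F| choose k), 0 < k < |F|, vanish in F: the polynomial
  (1 + X)^|F| - X^|F| - 1 has degree below |F| and vanishes everywhere.\<close>
lemma binomial_card_field_eq_0:
  assumes "0 < k" "k < card (UNIV :: 'c::{field,finite} set)"
  shows "of_nat (card (UNIV :: 'c set) choose k) = (0::'c)"
proof -
  define q where "q = card (UNIV :: 'c set)"
  have q2: "q \<ge> 2" unfolding q_def by (rule card_field_ge2)
  define p :: "'c poly" where "p = [:1,1:] ^ q - monom 1 q - 1"
  have coeff_p: "coeff p n = (if n \<le> q then of_nat (q choose n) else 0)
                    - (if n = q then 1 else 0) - (if n = 0 then 1 else 0)" for n
    using q2 by (auto simp: p_def coeff_monom coeff_linear_poly_power coeff_eq_0 degree_linear_power)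
  have "p = 0"
  proof (rule ccontr)
    assume "p \<noteq> 0"
    moreover have "degree p \<le> q - 1"
      by (rule degree_le) (use q2 in \<open>auto simp: coeff_p\<close>)
    moreover have "poly p x = 0" for x
      unfolding p_def using pow_card_field[of x] pow_card_field[of "1+x"]
      by (simp add: q_def poly_monom)
    ultimately have "card (UNIV :: 'c set) \<le> q - 1" by (intro card_roots_le_degree)
    thus False using q2 unfolding q_def by auto
  qed
  hence "coeff p k = 0" by simp
  thus ?thesis using assms by (simp add: coeff_p q_def)
qed

lemma power_add_eq_if_binomials_vanish:
  fixes x y :: "'b :: field"
  assumes "\<And>k. 0 < k \<Longrightarrow> k < n \<Longrightarrow> of_nat (n choose k) = (0::'b)" "n > 0"
  shows "(x + y) ^ n = x ^ n + y ^ n"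
proof -
  have "(x + y) ^ n = (\<Sum>k\<le>n. of_nat (n choose k) * x ^ k * y ^ (n - k))"
    by (rule binomial_ring)
  also have "\<dots> = (\<Sum>k\<in>{0,n}. of_nat (n choose k) * x ^ k * y ^ (n - k))"
    by (intro sum.mono_neutral_right) (use assms in auto)
  finally show ?thesis using assms by (simp add: add_ac)
qed

lemma card_le_fibres:
  assumes "finite A" "\<And>v. card {x\<in>A. f x = v} \<le> k"
  shows "card A \<le> k * card (f ` A)"
proof -
  have "A = (\<Union>v\<in>f ` A. {x\<in>A. f x = v})" by auto
  hence "card A = (\<Sum>v\<in>f ` A. card {x\<in>A. f x = v})"
    using assms(1) by (subst card_UN_disjoint[symmetric]) auto
  also have "\<dots> \<le> (\<Sum>v\<in>f ` A. k)" by (rule sum_mono) (use assms in auto)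
  finally show ?thesis by (simp add: mult.commute)
qed

definition sum_prod :: "'c::field \<times> 'c \<Rightarrow> 'c \<times> 'c" where
  "sum_prod x = (fst x + snd x, fst x * snd x)"

text \<open>Both components of a root pair are roots of z^2 - u z + w; the first component determines
  the pair, so sum_prod has fibres of size at most 2.\<close>
lemma card_sum_prod_fibre: "card {x\<in>A. sum_prod x = v} \<le> 2"
proof -
  obtain u w where v: "v = (u, w)" by (cases v)
  let ?F = "{x\<in>A. sum_prod x = v}"
  have "inj_on fst ?F" by (auto simp: inj_on_def v sum_prod_def)
  hence "card ?F = card (fst ` ?F)" by (simp add: card_image)
  also have "\<dots> \<le> 2"
  proof (rule card_roots_le_degree[of "[:w, -u, 1:]"])
    show "poly [:w, -u, 1:] z = 0" if "z \<in> fst ` ?F" for z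
      using that by (auto simp: v sum_prod_def algebra_simps)
  qed auto
  finally show ?thesis .
qed

lemma sum_prod_eq_double:
  assumes "sum_prod x = (r + r, r * r)"
  shows "x = (r, r)"
proof -
  obtain r1 r2 where x: "x = (r1, r2)" by (cases x)
  have s: "r1 + r2 = r + r" and p: "r1 * r2 = r * r" using assms by (auto simp: x sum_prod_def)
  have "(r1 - r) * (r1 - r) = 0" using s p by algebra
  hence "r1 = r" by simp
  thus ?thesis using s by (simp add: x)
qed

section \<open>The quadratic extension F_q \<subseteq> F_(q^2)\<close>

locale quadratic_extension =
  fixes emb :: "'a::{field,finite} \<Rightarrow> 'b::{field,finite}" and q :: nat
  assumes q_def: "q = card (UNIV::'a set)"
    and card_ext: "card (UNIV :: 'b set) = q ^ 2"
    and emb_add: "\<And>x y. emb (x + y) = emb x + emb y"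
    and emb_mult: "\<And>x y. emb (x * y) = emb x * emb y"
    and emb_1: "emb 1 = 1"
begin

lemma emb_0 [simp]: "emb 0 = 0"
proof -
  have "emb 0 + emb 0 = emb 0 + 0" using emb_add[of 0 0] by simp
  thus ?thesis by (rule add_left_imp_eq)
qed

lemma emb_neg: "emb (- x) = - emb x"
proof -
  have "emb x + emb (-x) = 0" using emb_add[of x "-x"] by simp
  thus ?thesis by (metis minus_unique)
qed

lemma emb_diff: "emb (x - y) = emb x - emb y"
  using emb_add[of x "-y"] by (simp add: emb_neg)

lemma emb_pow: "emb (x ^ n) = emb x ^ n"
  by (induction n) (simp_all add: emb_1 emb_mult)

lemma emb_eq_0_iff [simp]: "emb x = 0 \<longleftrightarrow> x = 0"
proof
  assume h: "emb x = 0"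
  show "x = 0"
  proof (rule ccontr)
    assume "x \<noteq> 0"
    hence "emb (x * inverse x) = 1" by (simp add: emb_1)
    thus False using h by (simp add: emb_mult)
  qed
qed simp

lemma emb_inj: "inj emb"
  by (rule injI) (metis emb_diff emb_eq_0_iff eq_iff_diff_eq_0)

lemma emb_eq_iff [simp]: "emb x = emb y \<longleftrightarrow> x = y"
  using emb_inj by (auto dest: injD)

lemma emb_inverse: "emb (inverse x) = inverse (emb x)"
proof (cases "x = 0")
  case False
  hence "emb x * emb (inverse x) = 1" by (simp add: emb_1 flip: emb_mult)
  thus ?thesis by (metis inverse_unique)
qed simp

lemma emb_divide: "emb (x / y) = emb x / emb y"
  by (simp add: divide_inverse emb_mult emb_inverse)

lemma emb_sum: "emb (sum f A) = (\<Sum>x\<in>A. emb (f x))"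
  by (induction A rule: infinite_finite_induct) (simp_all add: emb_add)

lemma emb_prod: "emb (prod f A) = (\<Prod>x\<in>A. emb (f x))"
  by (induction A rule: infinite_finite_induct) (simp_all add: emb_mult emb_1)

lemma emb_of_nat: "emb (of_nat n) = of_nat n"
  by (induction n) (simp_all add: emb_add emb_1)

lemma card_range_emb: "card (range emb) = q"
  using emb_inj by (simp add: card_image q_def)

lemma q_ge2: "q \<ge> 2"
  unfolding q_def by (rule card_field_ge2)

text \<open>The Frobenius fixes F_q pointwise and is an involution of F_(q^2); it is additive because
  the binomial coefficients (q choose k), 0 < k < q, vanish in F_q and hence in F_(q^2).\<close>
lemma emb_frob: "emb x ^ q = emb x"
  by (metis emb_pow pow_card_field q_def)

lemma frob_frob: "((x::'b) ^ q) ^ q = x"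
  using pow_card_field[of x] card_ext by (simp add: power2_eq_square power_mult)

lemma frob_add: "((x::'b) + y) ^ q = x ^ q + y ^ q"
proof (rule power_add_eq_if_binomials_vanish)
  fix k assume "0 < k" "k < q"
  hence "of_nat (q choose k) = (0::'a)" using binomial_card_field_eq_0[of k] unfolding q_def by auto
  hence "emb (of_nat (q choose k)) = 0" by simp
  thus "of_nat (q choose k) = (0::'b)" by (simp add: emb_of_nat)
qed (use q_ge2 in auto)

lemma frob_0 [simp]: "(0::'b) ^ q = 0"
  using q_ge2 by simp

lemma frob_diff: "((x::'b) - y) ^ q = x ^ q - y ^ q"
proof -
  have "y ^ q + (-y) ^ q = 0" using frob_add[of y "-y"] by simp
  hence "(-y) ^ q = - (y ^ q)" by (metis minus_unique)
  thus ?thesis using frob_add[of x "-y"] by simp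
qed

lemma frob_sum: "(sum (f :: _ \<Rightarrow> 'b) A) ^ q = (\<Sum>x\<in>A. f x ^ q)"
  by (induction A rule: infinite_finite_induct) (simp_all add: frob_add)

text \<open>F_q is the fixed field of the Frobenius: X^q - X has at most q roots, and the q elements
  of F_q are roots already.\<close>
lemma frob_fixed_iff: "(t::'b) ^ q = t \<longleftrightarrow> t \<in> range emb"
proof
  assume ht: "t ^ q = t"
  show "t \<in> range emb"
  proof (rule ccontr)
    assume nt: "t \<notin> range emb"
    define p :: "'b poly" where "p = monom 1 q - [:0,1:]"
    have "coeff p q = 1" using q_ge2 by (simp add: p_def coeff_monom coeff_pCons split: nat.split)
    hence "p \<noteq> 0" by auto
    moreover have "degree p \<le> q"
      unfolding p_def by (rule degree_diff_le) (use q_ge2 in \<open>auto simp: degree_monom_le\<close>)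
    moreover have "poly p x = 0" if "x \<in> insert t (range emb)" for x
      using that ht emb_frob by (auto simp: p_def poly_monom)
    ultimately have "card (insert t (range emb)) \<le> q" by (rule card_roots_le_degree)
    thus False using nt card_range_emb by simp
  qed
qed (auto simp: emb_frob)

lemma emb_inv_emb: "(t::'b) ^ q = t \<Longrightarrow> emb (inv emb t) = t"
  using frob_fixed_iff by (auto simp: f_inv_into_f)

lemma norm_frob: "((t::'b) ^ q * t) ^ q = t ^ q * t"
  by (simp add: power_mult_distrib frob_frob mult.commute)

lemma trace_frob: "((t::'b) + t ^ q) ^ q = t + t ^ q"
  by (simp add: frob_add frob_frob add.commute)

text \<open>Some element has trace 1: otherwise the trace X + X^q, of degree q, would vanish on all of
  F_(q^2), hence be 0; so some trace m is nonzero and w / m has trace 1.\<close>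
lemma exists_trace_one: "\<exists>l::'b. l + l ^ q = 1"
proof -
  have "\<exists>w::'b. w + w ^ q \<noteq> 0"
  proof (rule ccontr)
    assume "\<not> ?thesis"
    hence all: "w + w ^ q = 0" for w :: 'b by auto
    define p :: "'b poly" where "p = monom 1 q + [:0,1:]"
    have "coeff p q = 1" using q_ge2 by (simp add: p_def coeff_monom coeff_pCons split: nat.split)
    hence "p \<noteq> 0" by auto
    moreover have "degree p \<le> q"
      unfolding p_def by (rule degree_add_le) (use q_ge2 in \<open>auto simp: degree_monom_le\<close>)
    moreover have "poly p x = 0" if "x \<in> UNIV" for x
      using all by (auto simp: p_def poly_monom add.commute)
    ultimately have "card (UNIV::'b set) \<le> q" by (rule card_roots_le_degree)
    hence "q ^ 2 \<le> q" using card_ext by simp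
    thus False using q_ge2 by (simp add: power2_eq_square)
  qed
  then obtain w :: 'b where w: "w + w ^ q \<noteq> 0" by blast
  define m where "m = w + w ^ q"
  have mq: "m ^ q = m" unfolding m_def by (rule trace_frob)
  have "(w / m) + (w / m) ^ q = 1"
    using w by (simp add: power_divide mq m_def[symmetric] field_simps)
  thus ?thesis by blast
qed

text \<open>The norm takes every nonzero value of F_q exactly q + 1 times: each fibre has at most
  q + 1 elements (roots of X^(q+1) - l), and the q - 1 fibres cover the q^2 - 1 units.\<close>
lemma card_norm_fibre_le:
  assumes "l \<noteq> 0"
  shows "card {t::'b. t ^ q * t = l} \<le> q + 1"
proof (rule card_roots_le_degree[of "monom 1 (q + 1) - [:l:]"])
  have "coeff (monom 1 (q + 1) - [:l:]) (q + 1) = (1::'b)" by (simp add: coeff_monom)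
  thus "monom 1 (q + 1) - [:l:] \<noteq> (0 :: 'b poly)" by (metis coeff_0 zero_neq_one)
  show "degree (monom 1 (q + 1) - [:l:]) \<le> q + 1"
    by (rule degree_diff_le) (auto simp: degree_monom_le)
qed (auto simp: poly_monom)

lemma card_norm_fibre:
  assumes "l \<in> range emb" "l \<noteq> 0"
  shows "card {t::'b. t ^ q * t = l} = q + 1"
proof (rule ccontr)
  assume ne: "card {t::'b. t ^ q * t = l} \<noteq> q + 1"
  define L where "L = range emb - {0::'b}"
  define fib where "fib m = {t::'b. t ^ q * t = m}" for m
  have cL: "card L = q - 1" unfolding L_def using card_range_emb by (simp add: card_Diff_singleton_if)
  have "UNIV - {0::'b} = (\<Union>m\<in>L. fib m)"
    unfolding L_def fib_def using norm_frob frob_fixed_iff by auto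
  hence "card (UNIV - {0::'b}) = card (\<Union>m\<in>L. fib m)" by simp
  also have "\<dots> = (\<Sum>m\<in>L. card (fib m))"
    by (rule card_UN_disjoint) (auto simp: fib_def)
  also have "\<dots> < (\<Sum>m\<in>L. q + 1)"
  proof (rule sum_strict_mono_ex1)
    show "\<forall>x\<in>L. card (fib x) \<le> q + 1" using card_norm_fibre_le unfolding fib_def L_def by auto
    show "\<exists>a\<in>L. card (fib a) < q + 1"
      using assms ne card_norm_fibre_le[of l] unfolding fib_def L_def by (intro bexI[of _ l]) auto
  qed (simp add: L_def)
  also have "\<dots> = (q - 1) * (q + 1)" using cL by simp
  finally have "q ^ 2 - 1 < (q - 1) * (q + 1)" using card_ext by (simp add: card_Diff_singleton_if)
  moreover have "(q - 1) * (q + 1) = q ^ 2 - 1" using q_ge2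
    by (cases q) (auto simp: power2_eq_square algebra_simps)
  ultimately show False by simp
qed

text \<open>The conceivable pairs of roots of a monic quadratic over F_q: both roots in F_q, or a
  conjugate pair (t, t^q) with t outside F_q.\<close>
definition root_pairs :: "('b \<times> 'b) set" where
  "root_pairs = range emb \<times> range emb \<union> (\<lambda>t. (t, t ^ q)) ` (- range emb)"

text \<open>Root pairs have coefficients in F_q; for a conjugate pair these are the trace and the norm.\<close>
lemma sum_prod_root_pairs: "sum_prod ` root_pairs \<subseteq> range emb \<times> range emb"
proof -
  have "sum_prod (emb x, emb y) \<in> range emb \<times> range emb" for x y
    by (auto simp: sum_prod_def simp flip: emb_add emb_mult)
  moreover have "sum_prod (t, t ^ q) \<in> range emb \<times> range emb" for t :: 'b
    using trace_frob[of t] norm_frob[of t] frob_fixed_iff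
    by (auto simp: sum_prod_def mult.commute)
  ultimately show ?thesis unfolding root_pairs_def by blast
qed

lemma card_root_pairs_off_diagonal:
  "card (root_pairs - (\<lambda>r. (r, r)) ` range emb) = (q * q - q) + (q * q - q)"
proof -
  let ?D = "(\<lambda>r. (r, r)) ` range emb" and ?C = "(\<lambda>t::'b. (t, t ^ q)) ` (- range emb)"
  have split: "root_pairs - ?D = (range emb \<times> range emb - ?D) \<union> ?C"
    unfolding root_pairs_def by auto
  have "card (range emb \<times> range emb - ?D) = q * q - q"
    using card_range_emb
    by (subst card_Diff_subset) (auto simp: card_cartesian_product card_image inj_on_def)
  moreover have "card ?C = q * q - q"
    using card_range_emb card_ext
    by (subst card_image) (auto simp: inj_on_def Compl_eq_Diff_UNIV card_Diff_subset power2_eq_square)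
  moreover have "(range emb \<times> range emb - ?D) \<inter> ?C = {}" by auto
  ultimately show ?thesis unfolding split by (subst card_Un_disjoint) auto
qed

text \<open>Counting: the 2 (q^2 - q) off-diagonal root pairs give at least q^2 - q coefficient pairs
  (fibres of size at most 2), the q diagonal pairs give q further ones (a double root is the only
  root); so every pair of coefficients in F_q arises from a root pair.\<close>
lemma sum_prod_root_pairs_eq: "sum_prod ` root_pairs = range emb \<times> range emb"
proof -
  define D where "D = (\<lambda>r. (r, r)) ` range emb"
  define Off where "Off = root_pairs - D"
  have parts: "root_pairs = Off \<union> D" unfolding Off_def D_def root_pairs_def by auto
  have "card Off \<le> 2 * card (sum_prod ` Off)"
    using card_sum_prod_fibre by (intro card_le_fibres) auto
  hence c_off: "q * q - q \<le> card (sum_prod ` Off)"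
    using card_root_pairs_off_diagonal unfolding Off_def D_def by simp
  have diag: "x \<in> D" if "sum_prod x \<in> sum_prod ` D" for x
    using that sum_prod_eq_double unfolding D_def by (fastforce simp: sum_prod_def)
  have "inj_on sum_prod D"
  proof (rule inj_onI)
    fix x y assume "x \<in> D" "y \<in> D" "sum_prod x = sum_prod y"
    then obtain r where "y = (r, r)" "sum_prod x = (r + r, r * r)"
      unfolding D_def by (auto simp: sum_prod_def)
    thus "x = y" using sum_prod_eq_double by blast
  qed
  hence c_diag: "card (sum_prod ` D) = q" unfolding D_def
    by (simp add: card_image inj_on_def card_range_emb)
  have "sum_prod ` Off \<inter> sum_prod ` D = {}" using diag unfolding Off_def by blast
  hence "card (sum_prod ` root_pairs) = card (sum_prod ` Off) + card (sum_prod ` D)"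
    unfolding parts image_Un by (intro card_Un_disjoint) auto
  hence "card (range emb \<times> range emb) \<le> card (sum_prod ` root_pairs)"
    using c_off c_diag q_ge2 card_range_emb by (simp add: card_cartesian_product)
  moreover have "card (sum_prod ` root_pairs) \<le> card (range emb \<times> range emb)"
    using sum_prod_root_pairs by (intro card_mono) auto
  ultimately show ?thesis using sum_prod_root_pairs by (intro card_subset_eq) auto
qed

lemma quadratic_root_outside:
  assumes "\<beta> \<in> range emb" "\<gamma> \<in> range emb" and no_root: "\<forall>r\<in>range emb. r*r + \<beta>*r + \<gamma> \<noteq> 0"
  shows "\<exists>t. t*t + \<beta>*t + \<gamma> = 0 \<and> t \<notin> range emb"
proof -
  have "(- \<beta>, \<gamma>) \<in> range emb \<times> range emb" using assms by (auto simp flip: emb_neg)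
  then obtain x where x: "x \<in> root_pairs" "sum_prod x = (- \<beta>, \<gamma>)"
    unfolding sum_prod_root_pairs_eq[symmetric] by auto
  have s: "\<beta> = - (fst x + snd x)" and p: "\<gamma> = fst x * snd x"
    using x(2) by (auto simp: sum_prod_def)
  have root: "fst x * fst x + \<beta> * fst x + \<gamma> = 0" unfolding s p by (simp add: algebra_simps)
  have "fst x \<notin> range emb" using root no_root by auto
  thus ?thesis using root by blast
qed

end

section \<open>The elliptic quadric\<close>

locale elliptic_setup = quadratic_extension emb q
  for emb :: "'a::{field,finite} \<Rightarrow> 'b::{field,finite}" and q +
  fixes a b c :: 'a
  assumes Q_irreducible: "irreducible (qform_poly a b c)"
begin

lemma Q_factors_trivially:
  "qform_poly a b c = f * g \<Longrightarrow> is_unit f \<or> is_unit g" "qform_poly a b c \<noteq> 0"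
  using Q_irreducible by (auto simp: irreducible_def)

text \<open>If a = 0, then x divides Q.\<close>
lemma a_nonzero: "a \<noteq> 0"
proof
  assume a0: "a = 0"
  have eq: "qform_poly a b c = [:0,1:] * [: [:0,b:], [:c:] :]"
    by (simp add: qform_poly_def a0)
  have "\<not> is_unit [:0, 1 :: 'a poly:]" by (auto simp: is_unit_poly_iff)
  moreover have "\<not> is_unit [: [:0,b:], [:c:] :]"
  proof
    assume "is_unit [: [:0,b:], [:c:] :]"
    then obtain k where k: "[: [:0,b:], [:c:] :] = [:k:]" "is_unit k" by (auto simp: is_unit_poly_iff)
    hence "c = 0" "k = [:0,b:]" by auto
    with k have "b = 0" by (auto simp: is_unit_poly_iff)
    with \<open>c = 0\<close> Q_factors_trivially(2) a0 show False by (simp add: qform_poly_def)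
  qed
  ultimately show False using Q_factors_trivially(1)[OF eq] by blast
qed

text \<open>A root r of Q(t, 1) would split off the linear factor x - r y of Q.\<close>
lemma Q_no_root: "a * r^2 + b * r + c \<noteq> 0"
proof
  assume hr: "a * r^2 + b * r + c = 0"
  define r' where "r' = - b / a - r"
  have hb: "b = - a * r - a * r'" using a_nonzero by (simp add: r'_def field_simps)
  have hc0: "c = - (b * r + a * r^2)"
    using hr by (metis add.commute add.left_commute eq_neg_iff_add_eq_0)
  have hc: "c = a * r * r'" using a_nonzero by (simp add: hc0 r'_def field_simps power2_eq_square)
  have eq: "qform_poly a b c = [: [:0,1:], [:-r:] :] * [: [:0,a:], [:-a*r':] :]"
    by (simp add: qform_poly_def hb hc algebra_simps)
  have "\<not> is_unit [: [:0,1:], [:-r:] :]" "\<not> is_unit [: [:0,a:], [:-a*r':] :]"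
    using a_nonzero by (auto simp: is_unit_poly_iff)
  thus False using Q_factors_trivially(1)[OF eq] by blast
qed

lemma Q_eq_0_iff: "a * x^2 + b * x * y + c * y^2 = 0 \<longleftrightarrow> x = 0 \<and> y = 0"
proof
  assume Q0: "a * x^2 + b * x * y + c * y^2 = 0"
  show "x = 0 \<and> y = 0"
  proof (cases "y = 0")
    case True
    thus ?thesis using Q0 a_nonzero by simp
  next
    case False
    have "a * (x/y)^2 + b * (x/y) + c = (a * x^2 + b * x * y + c * y^2) / y^2"
      using False by (simp add: field_simps power2_eq_square)
    hence "a * (x/y)^2 + b * (x/y) + c = 0" using Q0 by simp
    thus ?thesis using Q_no_root by blast
  qed
qed simp

lemma exists_norm_a: "\<exists>\<rho>::'b. \<rho> ^ q * \<rho> = emb a"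
proof -
  have "card {t::'b. t ^ q * t = emb a} = q + 1" by (rule card_norm_fibre) (use a_nonzero in auto)
  hence "{t::'b. t ^ q * t = emb a} \<noteq> {}" by (intro notI) simp
  thus ?thesis by blast
qed

lemma exists_root_outside:
  "\<exists>\<theta>::'b. emb a * \<theta> * \<theta> + emb b * \<theta> + emb c = 0 \<and> \<theta> \<notin> range emb"
proof -
  have "\<exists>t. t*t + emb (b/a)*t + emb (c/a) = 0 \<and> t \<notin> range emb"
  proof (rule quadratic_root_outside)
    show "\<forall>r\<in>range emb. r*r + emb (b/a)*r + emb (c/a) \<noteq> 0"
    proof
      fix r assume "r \<in> range emb"
      then obtain x where x: "r = emb x" by auto
      have "x*x + (b/a)*x + c/a \<noteq> 0"
        using Q_no_root[of x] a_nonzero by (simp add: field_simps power2_eq_square)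
      hence "emb (x*x + (b/a)*x + c/a) \<noteq> 0" by simp
      moreover have "emb (x*x + (b/a)*x + c/a) = r*r + emb (b/a)*r + emb (c/a)"
        by (simp only: x emb_add emb_mult)
      ultimately show "r*r + emb (b/a)*r + emb (c/a) \<noteq> 0" by metis
    qed
  qed auto
  then obtain t where t: "t*t + emb (b/a)*t + emb (c/a) = 0" "t \<notin> range emb" by blast
  have "emb a * t * t + emb b * t + emb c = emb a * (t*t + emb (b/a)*t + emb (c/a))"
    using a_nonzero by (simp add: emb_divide field_simps)
  thus ?thesis using t by auto
qed

end

locale elliptic_param = elliptic_setup emb q a b c
  for emb :: "'a::{field,finite} \<Rightarrow> 'b::{field,finite}" and q a b c +
  fixes \<theta> \<rho> :: 'b
  assumes theta_root: "emb a * \<theta> * \<theta> + emb b * \<theta> + emb c = 0"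
    and theta_outside: "\<theta> \<notin> range emb"
    and rho_norm: "\<rho> ^ q * \<rho> = emb a"
begin

definition "\<theta>' = \<theta> ^ q"
definition "\<delta> = \<theta> - \<theta>'"

lemma theta'_ne: "\<theta>' \<noteq> \<theta>"
  using theta_outside frob_fixed_iff unfolding \<theta>'_def by blast

lemma delta_nonzero: "\<delta> \<noteq> 0" using theta'_ne unfolding \<delta>_def by simp

lemma theta'_frob: "\<theta>' ^ q = \<theta>" by (simp add: \<theta>'_def frob_frob)

lemma rho_nonzero: "\<rho> \<noteq> 0" using rho_norm a_nonzero by auto

lemma theta'_root: "emb a * \<theta>' * \<theta>' + emb b * \<theta>' + emb c = 0"
proof -
  have "(emb a * \<theta> * \<theta> + emb b * \<theta> + emb c) ^ q = 0" using theta_root by simp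
  thus ?thesis by (simp add: frob_add power_mult_distrib emb_frob \<theta>'_def)
qed

lemma vieta_sum: "emb a * (\<theta> + \<theta>') = - emb b"
proof -
  have "(\<theta> - \<theta>') * (emb a * (\<theta> + \<theta>') + emb b) =
     (emb a * \<theta> * \<theta> + emb b * \<theta> + emb c) - (emb a * \<theta>' * \<theta>' + emb b * \<theta>' + emb c)"
    by (simp add: algebra_simps)
  hence "(\<theta> - \<theta>') * (emb a * (\<theta> + \<theta>') + emb b) = 0"
    using theta_root theta'_root by simp
  thus ?thesis using theta'_ne by (simp add: eq_neg_iff_add_eq_0)
qed

lemma vieta_prod: "emb a * (\<theta> * \<theta>') = emb c"
proof -
  have hc: "emb c = -(emb a*\<theta>*\<theta> + emb b*\<theta>)" using theta_root
    by (metis add.commute eq_neg_iff_add_eq_0)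
  have hb: "emb b = - (emb a * (\<theta>+\<theta>'))" using vieta_sum by simp
  show ?thesis unfolding hc hb by (simp add: algebra_simps)
qed

lemma Q_factor:
  "emb (a * x^2 + b * x * y + c * y^2) = emb a * ((emb x - \<theta> * emb y) * (emb x - \<theta>' * emb y))"
proof -
  have "emb (a * x^2 + b * x * y + c * y^2) = emb a * emb x ^ 2 + emb b * emb x * emb y + emb c * emb y ^ 2"
    by (simp add: emb_add emb_mult emb_pow)
  also have "\<dots> = emb a * emb x ^ 2 - emb a * (\<theta> + \<theta>') * emb x * emb y + emb a * (\<theta> * \<theta>') * emb y ^ 2"
    by (simp add: vieta_sum vieta_prod)
  also have "\<dots> = emb a * ((emb x - \<theta> * emb y) * (emb x - \<theta>' * emb y))"
    by (simp add: algebra_simps power2_eq_square)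
  finally show ?thesis .
qed

lemma theta_coords_unique:
  assumes "x - \<theta> * y = x' - \<theta> * y'" "x - \<theta>' * y = x' - \<theta>' * y'"
  shows "x = x' \<and> y = y'"
proof -
  have "(\<theta>' - \<theta>) * y = (x - \<theta> * y) - (x - \<theta>' * y)" by (simp add: algebra_simps)
  also have "\<dots> = (x' - \<theta> * y') - (x' - \<theta>' * y')" using assms by simp
  also have "\<dots> = (\<theta>' - \<theta>) * y'" by (simp add: algebra_simps)
  finally have "y = y'" using theta'_ne by simp
  thus ?thesis using assms(1) by simp
qed

end

definition pt1 :: "'b::field \<Rightarrow> nat \<Rightarrow> 'b" where
  "pt1 t = (\<lambda>i. if i = 0 then 1 else if i = 1 then t else 0)"

definition pinf :: "nat \<Rightarrow> 'b::field" where
  "pinf = (\<lambda>i. if i = 1 then 1 else 0)"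

lemma P1_char: "proj_points 1 = range pt1 \<union> {pinf}"
proof
  show "proj_points 1 \<subseteq> range pt1 \<union> {pinf}"
  proof
    fix P :: "nat \<Rightarrow> 'b" assume "P \<in> proj_points 1"
    then obtain i where P: "\<forall>j>1. P j = 0" "i \<le> 1" "P i = 1" "\<forall>j<i. P j = 0"
      unfolding proj_points_def by blast
    show "P \<in> range pt1 \<union> {pinf}"
    proof (cases "i = 0")
      case True
      hence "P = pt1 (P 1)" using P by (auto simp: pt1_def fun_eq_iff)
      thus ?thesis by auto
    next
      case False
      hence "i = 1" using P by auto
      have "P x = pinf x" for x
      proof (cases "x = 0 \<or> x = 1")
        case False
        hence "x > 1" by arith
        thus ?thesis using P by (auto simp: pinf_def)
      qed (use P \<open>i = 1\<close> in \<open>auto simp: pinf_def\<close>)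
      hence "P = pinf" by (simp add: fun_eq_iff)
      thus ?thesis by auto
    qed
  qed
  show "range pt1 \<union> {pinf} \<subseteq> proj_points 1"
    by (auto simp: proj_points_def pt1_def pinf_def intro: exI[of _ 0] exI[of _ 1])
qed

lemma pt1_coords [simp]: "pt1 t 0 = 1" "pt1 t 1 = t" and pinf_coords [simp]: "pinf 0 = 0" "pinf 1 = 1"
  by (simp_all add: pt1_def pinf_def)

lemma pt1_in_P1: "pt1 t \<in> proj_points 1" and pinf_in_P1: "pinf \<in> proj_points 1"
  using P1_char by blast+

lemma pt1_inj: "inj pt1"
  by (rule injI) (metis (mono_tags) pt1_def one_neq_zero)

lemma card_P1: "card (proj_points 1 :: (nat \<Rightarrow> 'b::{field,finite}) set) = card (UNIV :: 'b set) + 1"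
proof -
  have "pt1 t 0 \<noteq> (pinf 0 :: 'b)" for t :: 'b by (simp add: pt1_def pinf_def)
  hence "pinf \<notin> range (pt1 :: 'b \<Rightarrow> _)" by (metis rangeE)
  hence "card (range (pt1 :: 'b \<Rightarrow> _) \<union> {pinf}) = card (range (pt1 :: 'b \<Rightarrow> _)) + 1"
    by (subst card_Un_disjoint) auto
  thus ?thesis unfolding P1_char using card_image[OF pt1_inj] by simp
qed

lemma finite_P1: "finite (proj_points 1 :: (nat \<Rightarrow> 'b::{field,finite}) set)"
  unfolding P1_char by simp

section \<open>The parametrisation of the quadric by P^1(F_(q^2))\<close>

text \<open>Coordinates are indexed by numerals; keep the simplifier from rewriting 1 to Suc 0.\<close>
declare One_nat_def [simp del]

context elliptic_param
begin

text \<open>The coordinates phi 0, ..., phi 3 of the parametrisation: the norms x^(q+1), y^(q+1) and the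
  F_q-coordinates (phi 1, phi 2) determined by phi 1 - theta phi 2 = x^q y / rho.\<close>
definition phi :: "nat \<Rightarrow> (nat \<Rightarrow> 'b) \<Rightarrow> 'b" where
  "phi i P = (if i = 0 then P 0 ^ q * P 0
     else if i = 1 then (\<theta> * inverse \<rho> ^ q * (P 0 * P 1 ^ q) - \<theta>' * inverse \<rho> * (P 0 ^ q * P 1)) / \<delta>
     else if i = 2 then (inverse \<rho> ^ q * (P 0 * P 1 ^ q) - inverse \<rho> * (P 0 ^ q * P 1)) / \<delta>
     else if i = 3 then P 1 ^ q * P 1 else 0)"

text \<open>phi 1 and phi 2 solve the two linear conditions phi 1 - theta phi 2 = x^q y / rho and
  phi 1 - theta' phi 2 = x y^q / rho^q (Cramer's rule with determinant delta).\<close>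
lemma divide_delta_eq: "A - x * B = \<delta> * C \<Longrightarrow> A / \<delta> - x * (B / \<delta>) = C"
  using delta_nonzero by (metis diff_divide_distrib nonzero_mult_div_cancel_left times_divide_eq_right)

lemma phi_12:
  "phi 1 P = (\<theta> * inverse \<rho> ^ q * (P 0 * P 1 ^ q) - \<theta>' * inverse \<rho> * (P 0 ^ q * P 1)) / \<delta>"
  "phi 2 P = (inverse \<rho> ^ q * (P 0 * P 1 ^ q) - inverse \<rho> * (P 0 ^ q * P 1)) / \<delta>"
  by (simp_all add: phi_def)

lemma phi_factor: "phi 1 P - \<theta> * phi 2 P = inverse \<rho> * (P 0 ^ q * P 1)"
  unfolding phi_12 by (rule divide_delta_eq) (simp add: \<delta>_def algebra_simps)

lemma phi_factor_conj: "phi 1 P - \<theta>' * phi 2 P = inverse \<rho> ^ q * (P 0 * P 1 ^ q)"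
  unfolding phi_12 by (rule divide_delta_eq) (simp add: \<delta>_def algebra_simps)

text \<open>The coordinates are F_q-rational: the Frobenius swaps the two linear conditions defining
  phi 1 and phi 2, so by theta_coords_unique it fixes them.\<close>
lemma phi_frob: "phi i P ^ q = phi i P"
proof -
  let ?x = "phi 1 P" and ?y = "phi 2 P"
  have conj: "(P 0 ^ q * P 1) ^ q = P 0 * P 1 ^ q" "(P 0 * P 1 ^ q) ^ q = P 0 ^ q * P 1"
    "(inverse \<rho> ^ q) ^ q = inverse \<rho>"
    by (simp_all add: power_mult_distrib frob_frob)
  have "?x ^ q - \<theta> * ?y ^ q = (?x - \<theta>' * ?y) ^ q"
    by (simp add: frob_diff power_mult_distrib theta'_frob)
  also have "\<dots> = ?x - \<theta> * ?y" by (simp add: phi_factor phi_factor_conj power_mult_distrib conj frob_frob)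
  finally have e1: "?x ^ q - \<theta> * ?y ^ q = ?x - \<theta> * ?y" .
  have "?x ^ q - \<theta>' * ?y ^ q = (?x - \<theta> * ?y) ^ q"
    by (simp add: frob_diff power_mult_distrib \<theta>'_def)
  also have "\<dots> = ?x - \<theta>' * ?y" by (simp add: phi_factor phi_factor_conj power_mult_distrib conj frob_frob)
  finally have "?x ^ q = ?x \<and> ?y ^ q = ?y" using e1 by (intro theta_coords_unique)
  thus ?thesis by (auto simp: phi_def norm_frob)
qed

definition tau :: "(nat \<Rightarrow> 'b) \<Rightarrow> nat \<Rightarrow> 'a" where
  "tau P = (\<lambda>i. inv emb (phi i P))"

lemma emb_tau: "emb (tau P i) = phi i P"
  unfolding tau_def using phi_frob emb_inv_emb by blast

lemma tau_eqI: "(\<And>i. phi i P = emb (e i)) \<Longrightarrow> tau P = e"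
  using emb_tau by (metis emb_eq_iff ext)

text \<open>tau satisfies the equation of the quadric: Q(phi 1, phi 2) factors as a times the norm of
  x^q y / rho, which is x^(q+1) y^(q+1).\<close>
lemma tau_equation:
  "tau P 0 * tau P 3 - (a * tau P 1 ^ 2 + b * tau P 1 * tau P 2 + c * tau P 2 ^ 2) = 0"
proof -
  have "emb (a * tau P 1 ^ 2 + b * tau P 1 * tau P 2 + c * tau P 2 ^ 2)
      = emb a * ((phi 1 P - \<theta> * phi 2 P) * (phi 1 P - \<theta>' * phi 2 P))"
    by (simp add: Q_factor emb_tau)
  also have "\<dots> = (emb a * (inverse \<rho> * inverse \<rho> ^ q)) * ((P 0 ^ q * P 0) * (P 1 ^ q * P 1))"
    by (simp add: phi_factor phi_factor_conj mult_ac)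
  also have "emb a * (inverse \<rho> * inverse \<rho> ^ q) = 1"
    using rho_nonzero by (simp add: rho_norm[symmetric] field_simps)
  also have "(P 0 ^ q * P 0) * (P 1 ^ q * P 1) = emb (tau P 0 * tau P 3)"
    by (simp add: emb_mult emb_tau phi_def)
  finally show ?thesis by simp
qed

lemma tau_pt1: "tau (pt1 t) 0 = 1" "emb (tau (pt1 t) 3) = t ^ q * t"
proof -
  have "emb (tau (pt1 t) 0) = emb 1" using emb_tau[of "pt1 t" 0] by (simp add: phi_def emb_1)
  thus "tau (pt1 t) 0 = 1" by simp
  show "emb (tau (pt1 t) 3) = t ^ q * t" using emb_tau[of "pt1 t" 3] by (simp add: phi_def pt1_def)
qed

lemma rho_inverse_cancel: "inverse \<rho> * \<rho> = 1" "inverse \<rho> ^ q * \<rho> ^ q = 1"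
  using rho_nonzero by (simp_all flip: power_mult_distrib)

lemma phi_pt1_factor: "phi 1 (pt1 t) - \<theta> * phi 2 (pt1 t) = inverse \<rho> * t"
  using phi_factor[of "pt1 t"] by simp

lemma phi_pt1_factor_conj: "phi 1 (pt1 t) - \<theta>' * phi 2 (pt1 t) = inverse \<rho> ^ q * t ^ q"
  using phi_factor_conj[of "pt1 t"] by simp

lemma tau_pinf: "tau pinf = (\<lambda>i. if i = 3 then 1 else 0)"
  by (rule tau_eqI) (auto simp: phi_def pinf_def emb_1)

lemma tau_beyond: "3 < i \<Longrightarrow> tau P i = 0"
  using emb_tau[of P i] by (simp add: phi_def)

lemma tau_in_E:
  assumes "P \<in> proj_points 1"
  shows "tau P \<in> elliptic_quadric a b c"
proof -
  have "tau P \<in> proj_points 3"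
  proof (cases "P = pinf")
    case True
    thus ?thesis by (auto simp: proj_points_def tau_pinf intro: exI[of _ 3])
  next
    case False
    then obtain t where "P = pt1 t" using assms unfolding P1_char by blast
    thus ?thesis by (auto simp: proj_points_def tau_pt1 tau_beyond intro: exI[of _ 0])
  qed
  thus ?thesis using tau_equation unfolding elliptic_quadric_def by blast
qed

text \<open>tau is injective: phi 0 separates infinity from the affine points, and on affine points
  (1 : t) the form phi 1 - theta phi 2 = t / rho recovers t.\<close>
lemma tau_inj: "inj_on tau (proj_points 1)"
proof (rule inj_onI)
  fix P P' assume P: "P \<in> proj_points 1" and P': "P' \<in> proj_points 1" and eq: "tau P = tau P'"
  hence phi_eq: "phi i P = phi i P'" for i by (metis emb_tau)
  have phi0: "phi 0 (pt1 t) = 1" "phi 0 pinf = 0" for t by (simp_all add: phi_def pt1_def pinf_def)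
  have affine: "t = t'" if "phi 1 (pt1 t) = phi 1 (pt1 t')" "phi 2 (pt1 t) = phi 2 (pt1 t')" for t t'
  proof -
    have "inverse \<rho> * t = inverse \<rho> * t'"
      using phi_pt1_factor[of t] phi_pt1_factor[of t'] that by metis
    thus ?thesis using rho_nonzero by simp
  qed
  show "P = P'"
    using P P' phi_eq[of 0] phi_eq[of 1] phi_eq[of 2] unfolding P1_char
    by (auto simp: phi0 dest: affine)
qed

text \<open>A point e of E with e 0 = 1 is tau (1 : t) for t = rho (e1 - theta e2): the two linear
  conditions of phi 1, phi 2 hold for (e1, e2), and t^(q+1) = a (norm of e1 - theta e2) = e3.\<close>
lemma tau_onto_affine:
  assumes e: "e \<in> elliptic_quadric a b c" and e0: "e 0 = 1"
  shows "e \<in> tau ` proj_points 1"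
proof -
  have e3: "e 3 = a * e 1 ^ 2 + b * e 1 * e 2 + c * e 2 ^ 2"
    using e e0 unfolding elliptic_quadric_def by simp
  have beyond: "3 < i \<Longrightarrow> e i = 0" for i using e unfolding elliptic_quadric_def proj_points_def by auto
  define u where "u = emb (e 1)"
  define v where "v = emb (e 2)"
  define t where "t = \<rho> * (u - \<theta> * v)"
  have tq: "t ^ q = \<rho> ^ q * (u - \<theta>' * v)"
    unfolding t_def u_def v_def by (simp add: power_mult_distrib frob_diff emb_frob \<theta>'_def)
  have "phi 1 (pt1 t) - \<theta> * phi 2 (pt1 t) = u - \<theta> * v"
    unfolding phi_pt1_factor t_def using rho_inverse_cancel by (simp add: mult.assoc[symmetric])
  moreover have "phi 1 (pt1 t) - \<theta>' * phi 2 (pt1 t) = u - \<theta>' * v"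
    unfolding phi_pt1_factor_conj tq using rho_inverse_cancel by (simp add: mult.assoc[symmetric])
  ultimately have "phi 1 (pt1 t) = u \<and> phi 2 (pt1 t) = v" by (rule theta_coords_unique)
  moreover have "phi 3 (pt1 t) = emb (e 3)"
    by (simp add: phi_def pt1_def tq e3 Q_factor flip: u_def v_def rho_norm) (simp add: t_def algebra_simps)
  ultimately have "tau (pt1 t) = e"
    by (intro tau_eqI) (auto simp: phi_def pt1_def e0 emb_1 beyond u_def v_def)
  thus ?thesis using pt1_in_P1 by blast
qed

text \<open>A point e of E with e 0 = 0 has Q(e1, e2) = 0, hence e1 = e2 = 0 and e = tau (0 : 1).\<close>
lemma tau_onto_infinity:
  assumes e: "e \<in> elliptic_quadric a b c" and e0: "e 0 = 0"
  shows "e = tau pinf"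
proof -
  have "a * e 1 ^ 2 + b * e 1 * e 2 + c * e 2 ^ 2 = 0"
    using e e0 unfolding elliptic_quadric_def by simp
  hence e12: "e 1 = 0" "e 2 = 0" using Q_eq_0_iff by blast+
  obtain i where i: "\<forall>j>3. e j = 0" "i \<le> 3" "e i = 1" "\<forall>j<i. e j = 0"
    using e unfolding elliptic_quadric_def proj_points_def by blast
  have "i \<noteq> 0" "i \<noteq> 1" "i \<noteq> 2" using i(3) e0 e12 by (metis zero_neq_one)+
  hence "i = 3" using i(2) by arith
  hence "e 3 = 1" using i(3) by simp
  moreover have "e j = 0" if "j \<noteq> 3" for j
  proof -
    have "j = 0 \<or> j = 1 \<or> j = 2 \<or> 3 < j" using that by arith
    thus ?thesis using e0 e12 i(1) by auto
  qed
  ultimately show ?thesis by (auto simp: tau_pinf)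
qed

lemma tau_bij: "bij_betw tau (proj_points 1) (elliptic_quadric a b c)"
proof -
  have "elliptic_quadric a b c \<subseteq> tau ` proj_points 1"
  proof
    fix e assume e: "e \<in> elliptic_quadric a b c"
    then obtain i where "i \<le> 3" "e i = 1" "\<forall>j<i. e j = 0"
      unfolding elliptic_quadric_def proj_points_def by blast
    hence "e 0 = 1 \<or> e 0 = 0" by (cases "i = 0") auto
    thus "e \<in> tau ` proj_points 1"
      using tau_onto_affine[OF e] tau_onto_infinity[OF e] pinf_in_P1 by blast
  qed
  thus ?thesis unfolding bij_betw_def using tau_inj tau_in_E by blast
qed

lemma card_E: "card (elliptic_quadric a b c) = q ^ 2 + 1"
  using bij_betw_same_card[OF tau_bij] card_P1[where 'b='b] card_ext by simp

lemma finite_E: "finite (elliptic_quadric a b c)"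
  using tau_bij finite_P1 bij_betw_finite by blast

end

section \<open>Forms spanned by graded families of monomials\<close>

locale graded_monomials =
  fixes mon :: "nat \<Rightarrow> 'k \<Rightarrow> 'p \<Rightarrow> 'c::field" and I :: "nat \<Rightarrow> 'k set"
    and comb :: "nat \<Rightarrow> nat \<Rightarrow> 'k \<Rightarrow> 'k \<Rightarrow> 'k" and k0 :: 'k
  assumes finite_I: "finite (I n)"
    and comb_mem: "k \<in> I m \<Longrightarrow> l \<in> I n \<Longrightarrow> comb m n k l \<in> I (m+n)"
    and comb_mon: "k \<in> I m \<Longrightarrow> l \<in> I n \<Longrightarrow> mon m k P * mon n l P = mon (m+n) (comb m n k l) P"
    and k0_mem: "k0 \<in> I 0"
    and k0_one: "mon 0 k0 P = 1"
begin

definition forms :: "nat \<Rightarrow> ('p \<Rightarrow> 'c) set" where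
  "forms n = {f. \<exists>\<alpha>. f = (\<lambda>P. \<Sum>k\<in>I n. \<alpha> k * mon n k P)}"

lemma formsI: "f = (\<lambda>P. \<Sum>k\<in>I n. \<alpha> k * mon n k P) \<Longrightarrow> f \<in> forms n"
  unfolding forms_def by blast

lemma formsE:
  "f \<in> forms n \<Longrightarrow> (\<And>\<alpha>. f = (\<lambda>P. \<Sum>k\<in>I n. \<alpha> k * mon n k P) \<Longrightarrow> thesis) \<Longrightarrow> thesis"
  unfolding forms_def by blast

lemma mon_in_forms:
  assumes "k \<in> I n" shows "mon n k \<in> forms n"
proof (rule formsI[where \<alpha>="\<lambda>j. if j = k then 1 else 0"], rule ext)
  fix P
  have "(\<Sum>j\<in>I n. (if j = k then 1 else 0) * mon n j P) = (\<Sum>j\<in>I n. if j = k then mon n j P else 0)"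
    by (rule sum.cong) auto
  also have "\<dots> = mon n k P" using assms by (simp add: sum.delta finite_I)
  finally show "mon n k P = (\<Sum>j\<in>I n. (if j = k then 1 else 0) * mon n j P)" by simp
qed

lemma forms_zero: "(\<lambda>P. 0) \<in> forms n"
  by (rule formsI[where \<alpha>="\<lambda>j. 0"]) simp

lemma forms_add: "f \<in> forms n \<Longrightarrow> g \<in> forms n \<Longrightarrow> (\<lambda>P. f P + g P) \<in> forms n"
proof (elim formsE)
  fix \<alpha> \<beta> assume "f = (\<lambda>P. \<Sum>k\<in>I n. \<alpha> k * mon n k P)" "g = (\<lambda>P. \<Sum>k\<in>I n. \<beta> k * mon n k P)"
  thus ?thesis by (intro formsI[where \<alpha>="\<lambda>k. \<alpha> k + \<beta> k"]) (simp add: sum.distrib algebra_simps)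
qed

lemma forms_smult: "f \<in> forms n \<Longrightarrow> (\<lambda>P. c * f P) \<in> forms n"
proof (elim formsE)
  fix \<alpha> assume "f = (\<lambda>P. \<Sum>k\<in>I n. \<alpha> k * mon n k P)"
  thus ?thesis by (intro formsI[where \<alpha>="\<lambda>k. c * \<alpha> k"]) (simp add: sum_distrib_left algebra_simps)
qed

lemma forms_sum: "(\<And>x. x \<in> A \<Longrightarrow> f x \<in> forms n) \<Longrightarrow> (\<lambda>P. \<Sum>x\<in>A. f x P) \<in> forms n"
proof (induction A rule: infinite_finite_induct)
  case (insert x F)
  have "(\<lambda>P. f x P + (\<Sum>x\<in>F. f x P)) \<in> forms n" using insert by (intro forms_add) auto
  thus ?case using insert by simp
qed (simp_all add: forms_zero)

lemma forms_mult: "f \<in> forms m \<Longrightarrow> g \<in> forms n \<Longrightarrow> (\<lambda>P. f P * g P) \<in> forms (m+n)"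
proof (elim formsE)
  fix \<alpha> \<beta>
  assume f: "f = (\<lambda>P. \<Sum>k\<in>I m. \<alpha> k * mon m k P)" and g: "g = (\<lambda>P. \<Sum>k\<in>I n. \<beta> k * mon n k P)"
  have "(\<lambda>P. f P * g P) = (\<lambda>P. \<Sum>k\<in>I m. \<Sum>l\<in>I n. (\<alpha> k * \<beta> l) * mon (m+n) (comb m n k l) P)"
    unfolding f g by (auto simp: sum_product comb_mon[symmetric] algebra_simps intro!: sum.cong)
  also have "\<dots> \<in> forms (m+n)"
    by (intro forms_sum forms_smult mon_in_forms comb_mem)
  finally show ?thesis .
qed

lemma forms_const: "(\<lambda>P. c) \<in> forms 0"
  using forms_smult[OF mon_in_forms[OF k0_mem], of c] by (simp add: k0_one)

lemma forms_prod:
  "(\<And>i. i \<in> A \<Longrightarrow> f i \<in> forms (d i)) \<Longrightarrow> (\<lambda>P. \<Prod>i\<in>A. f i P) \<in> forms (\<Sum>i\<in>A. d i)"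
proof (induction A rule: infinite_finite_induct)
  case (insert x F)
  have "(\<lambda>P. f x P * (\<Prod>i\<in>F. f i P)) \<in> forms (d x + (\<Sum>i\<in>F. d i))"
    using insert by (intro forms_mult) auto
  thus ?case using insert by simp
qed (simp_all add: forms_const)

lemma forms_pow: "f \<in> forms m \<Longrightarrow> (\<lambda>P. f P ^ n) \<in> forms (m * n)"
  using forms_prod[of "{..<n}" "\<lambda>_. f" "\<lambda>_. m"] by (simp add: mult.commute)

end

definition mon3 :: "nat \<Rightarrow> (nat \<Rightarrow> nat) \<Rightarrow> (nat \<Rightarrow> 'c::field) \<Rightarrow> 'c" where
  "mon3 n e P = (\<Prod>i\<le>3. P i ^ e i)"

lemma finite_monomials: "finite (monomials r n)"
proof -
  have "monomials r n \<subseteq> (\<lambda>g i. if i \<le> r then g i else 0) ` ({..r} \<rightarrow>\<^sub>E {..n})"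
  proof
    fix e assume e: "e \<in> monomials r n"
    hence le: "e i \<le> n" if "i \<le> r" for i
      using that by (auto simp: monomials_def intro: member_le_sum[of i "{..r}" e, simplified])
    show "e \<in> (\<lambda>g i. if i \<le> r then g i else 0) ` ({..r} \<rightarrow>\<^sub>E {..n})"
      by (rule image_eqI[of _ _ "restrict e {..r}"]) (use e le in \<open>auto simp: monomials_def\<close>)
  qed
  thus ?thesis by (rule finite_subset) (intro finite_imageI finite_PiE, auto)
qed

interpretation Forms3: graded_monomials "mon3 :: _ \<Rightarrow> _ \<Rightarrow> (nat \<Rightarrow> 'c::field) \<Rightarrow> 'c"
  "monomials 3" "\<lambda>m n e e' i. e i + e' i" "\<lambda>_. 0"
proof
  show "finite (monomials 3 n)" for n by (rule finite_monomials)
  fix k l m n assume "k \<in> monomials 3 m" "l \<in> monomials 3 n"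
  thus "(\<lambda>i. k i + l i) \<in> monomials 3 (m + n)" by (auto simp: monomials_def sum.distrib)
  show "mon3 m k P * mon3 n l P = mon3 (m + n) (\<lambda>i. k i + l i) P" for P :: "nat \<Rightarrow> 'c"
    by (simp add: mon3_def prod.distrib[symmetric] power_add)
qed (auto simp: mon3_def monomials_def)

lemma eval_code_forms: "eval_code 3 X s = {res X g | g. g \<in> Forms3.forms s}"
  unfolding eval_code_def Forms3.forms_def mon3_def by blast

lemma coord_in_forms3: "i \<le> 3 \<Longrightarrow> (\<lambda>v. v i :: 'c::field) \<in> Forms3.forms 1"
proof -
  assume i: "i \<le> 3"
  define e where "e = (\<lambda>j::nat. if j = i then 1 else 0 :: nat)"
  have "e \<in> monomials 3 1" using i by (auto simp: e_def monomials_def)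
  hence "mon3 1 e \<in> (Forms3.forms 1 :: ((nat \<Rightarrow> 'c) \<Rightarrow> 'c) set)" by (rule Forms3.mon_in_forms)
  moreover have "mon3 1 e = (\<lambda>v::nat \<Rightarrow> 'c. v i)"
  proof
    fix v :: "nat \<Rightarrow> 'c"
    have "mon3 1 e v = (\<Prod>j\<le>3. if j = i then v j else 1)"
      unfolding mon3_def e_def by (intro prod.cong) auto
    also have "\<dots> = v i" using i by (simp add: prod.delta)
    finally show "mon3 1 e v = v i" .
  qed
  ultimately show ?thesis by simp
qed

lemma linear_in_forms3:
  "i \<le> 3 \<Longrightarrow> j \<le> 3 \<Longrightarrow> (\<lambda>v. x * v i + y * v j :: 'c::field) \<in> Forms3.forms 1"
  by (intro Forms3.forms_add Forms3.forms_smult coord_in_forms3)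

definition bch_mon :: "nat \<Rightarrow> nat \<Rightarrow> nat \<times> nat \<Rightarrow> (nat \<Rightarrow> 'b::field) \<Rightarrow> 'b" where
  "bch_mon q n k P = (case k of (i, j) \<Rightarrow> P 0 ^ (i + q*j) * P 1 ^ ((n-i) + q*(n-j)))"

lemma bch_mon_graded:
  "graded_monomials (bch_mon q :: _ \<Rightarrow> _ \<Rightarrow> (nat \<Rightarrow> 'b::field) \<Rightarrow> 'b) (\<lambda>n. {0..n}\<times>{0..n})
     (\<lambda>m n k l. (fst k + fst l, snd k + snd l)) (0,0)"
proof
  fix k l :: "nat \<times> nat" and m n :: nat and P :: "nat \<Rightarrow> 'b::field"
  assume k: "k \<in> {0..m}\<times>{0..m}" and l: "l \<in> {0..n}\<times>{0..n}"
  obtain i j where ij: "k = (i,j)" by (cases k)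
  obtain i' j' where ij': "l = (i',j')" by (cases l)
  have e1: "(i + q * j) + (i' + q * j') = (i + i') + q * (j + j')" by (simp add: algebra_simps)
  have d1: "(m + n) - (i + i') = (m - i) + (n - i')" and d2: "(m + n) - (j + j') = (m - j) + (n - j')"
    using k l by (auto simp: ij ij')
  have e2: "((m - i) + q * (m - j)) + ((n - i') + q * (n - j'))
            = ((m + n) - (i + i')) + q * ((m + n) - (j + j'))"
    unfolding d1 d2 by (simp add: algebra_simps)
  show "bch_mon q m k P * bch_mon q n l P = bch_mon q (m + n) (fst k + fst l, snd k + snd l) P"
    unfolding bch_mon_def ij ij' using e1 e2 by (simp add: power_add[symmetric] algebra_simps)
  show "(fst k + fst l, snd k + snd l) \<in> {0..m+n}\<times>{0..m+n}" using k l by (auto simp: ij ij')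
qed (auto simp: bch_mon_def)

lemma Bext_forms:
  "Bext q s = {res (proj_points 1) g | g.
     g \<in> graded_monomials.forms (bch_mon q :: _ \<Rightarrow> _ \<Rightarrow> (nat \<Rightarrow> 'b::field) \<Rightarrow> 'b) (\<lambda>n. {0..n}\<times>{0..n}) s}"
proof -
  interpret BCH: graded_monomials "bch_mon q :: _ \<Rightarrow> _ \<Rightarrow> (nat \<Rightarrow> 'b) \<Rightarrow> 'b" "\<lambda>n. {0..n}\<times>{0..n}"
    "\<lambda>m n k l. (fst k + fst l, snd k + snd l)" "(0,0)"
    by (rule bch_mon_graded)
  have "(\<lambda>P. \<Sum>(i,j)\<in>{0..s}\<times>{0..s}. \<alpha> (i,j) * (P 0 ^ (i + q*j) * P 1 ^ ((s-i) + q*(s-j)))) =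
        (\<lambda>P::nat \<Rightarrow> 'b. \<Sum>k\<in>{0..s}\<times>{0..s}. \<alpha> k * bch_mon q s k P)" for \<alpha>
    by (intro ext sum.cong) (auto simp: bch_mon_def)
  note eq = this
  show ?thesis unfolding Bext_def BCH.forms_def eq by auto
qed

lemma bch_mon_split:
  assumes "i \<le> j" "j \<le> s"
  shows "bch_mon q s (i, j) P = (P 0 ^ q * P 0) ^ i * (P 0 ^ q * P 1) ^ (j - i) * (P 1 ^ q * P 1) ^ (s - j)"
        "bch_mon q s (j, i) P = (P 0 ^ q * P 0) ^ i * (P 0 * P 1 ^ q) ^ (j - i) * (P 1 ^ q * P 1) ^ (s - j)"
proof -
  obtain d d' where d: "j = i + d" "s = j + d'" using assms le_Suc_ex by metis
  show "bch_mon q s (i, j) P = (P 0 ^ q * P 0) ^ i * (P 0 ^ q * P 1) ^ (j - i) * (P 1 ^ q * P 1) ^ (s - j)"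
    by (simp add: bch_mon_def d power_mult_distrib power_add algebra_simps flip: power_mult)
  show "bch_mon q s (j, i) P = (P 0 ^ q * P 0) ^ i * (P 0 * P 1 ^ q) ^ (j - i) * (P 1 ^ q * P 1) ^ (s - j)"
    by (simp add: bch_mon_def d power_mult_distrib power_add algebra_simps flip: power_mult)
qed

section \<open>Pulling forms back along the parametrisation\<close>

sublocale elliptic_param \<subseteq> BCH: graded_monomials "bch_mon q :: _ \<Rightarrow> _ \<Rightarrow> (nat \<Rightarrow> 'b) \<Rightarrow> 'b"
  "\<lambda>n. {0..n}\<times>{0..n}" "\<lambda>m n k l. (fst k + fst l, snd k + snd l)" "(0,0)"
  by (rule bch_mon_graded)

context elliptic_param
begin

lemma bch_mon_1:
  "bch_mon q 1 (1,1) P = P 0 ^ q * P 0" "bch_mon q 1 (0,0) P = P 1 ^ q * P 1"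
  "bch_mon q 1 (1,0) P = P 0 * P 1 ^ q" "bch_mon q 1 (0,1) P = P 0 ^ q * P 1"
  by (simp_all add: bch_mon_def mult.commute power_add)

lemma phi_in_BCH: "i \<le> 3 \<Longrightarrow> phi i \<in> BCH.forms 1"
proof -
  assume i: "i \<le> 3"
  have m: "bch_mon q 1 k \<in> BCH.forms 1" if "k \<in> {(1,1), (0,0), (1,0), (0,1)}" for k
    using that by (auto intro!: BCH.mon_in_forms)
  consider "i = 0" | "i = 1" | "i = 2" | "i = 3" using i by arith
  thus ?thesis
  proof cases
    case 1
    have "phi i = bch_mon q 1 (1,1)" by (rule ext) (simp add: phi_def 1 bch_mon_1)
    thus ?thesis using m by simp
  next
    case 4
    have "phi i = bch_mon q 1 (0,0)" by (rule ext) (simp add: phi_def 4 bch_mon_1)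
    thus ?thesis using m by simp
  next
    case 2
    have "phi i = (\<lambda>P. (\<theta> * inverse \<rho> ^ q / \<delta>) * bch_mon q 1 (1,0) P
                    + (- \<theta>' * inverse \<rho> / \<delta>) * bch_mon q 1 (0,1) P)"
      by (rule ext) (simp add: phi_def 2 bch_mon_1 diff_divide_distrib)
    thus ?thesis by (simp only:) (intro BCH.forms_add BCH.forms_smult m, auto)
  next
    case 3
    have "phi i = (\<lambda>P. (inverse \<rho> ^ q / \<delta>) * bch_mon q 1 (1,0) P
                    + (- inverse \<rho> / \<delta>) * bch_mon q 1 (0,1) P)"
      by (rule ext) (simp add: phi_def 3 bch_mon_1 diff_divide_distrib)
    thus ?thesis by (simp only:) (intro BCH.forms_add BCH.forms_smult m, auto)
  qed
qed

lemma emb_mon3_tau: "emb (mon3 s e (tau P)) = mon3 s e (\<lambda>i. phi i P)"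
  by (simp add: mon3_def emb_prod emb_pow emb_tau)

lemma pullback_in_BCH:
  assumes "g \<in> Forms3.forms s"
  shows "(\<lambda>P. emb (g (tau P))) \<in> BCH.forms s"
proof -
  obtain \<alpha> where g: "g = (\<lambda>v. \<Sum>e\<in>monomials 3 s. \<alpha> e * mon3 s e v)"
    using assms by (rule Forms3.formsE)
  have "(\<lambda>P. mon3 s e (\<lambda>i. phi i P)) \<in> BCH.forms s" if e: "e \<in> monomials 3 s" for e
  proof -
    have "(\<lambda>P. \<Prod>i\<le>3. phi i P ^ e i) \<in> BCH.forms (\<Sum>i\<le>3. 1 * e i)"
      by (intro BCH.forms_prod BCH.forms_pow phi_in_BCH) auto
    thus ?thesis using e by (simp add: mon3_def monomials_def)
  qed
  hence "(\<lambda>P. \<Sum>e\<in>monomials 3 s. emb (\<alpha> e) * mon3 s e (\<lambda>i. phi i P)) \<in> BCH.forms s"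
    by (intro BCH.forms_sum BCH.forms_smult)
  thus ?thesis by (simp add: g emb_sum emb_mult emb_mon3_tau)
qed

lemma pullback_in_Bext0:
  assumes "g \<in> Forms3.forms s"
  shows "res (proj_points 1) (\<lambda>P. g (tau P)) \<in> Bext0 emb q s"
proof -
  have "emb \<circ> res (proj_points 1) (\<lambda>P. g (tau P)) = res (proj_points 1) (\<lambda>P. emb (g (tau P)))"
    by (auto simp: res_def fun_eq_iff)
  also have "\<dots> \<in> Bext q s" unfolding Bext_forms using pullback_in_BCH[OF assms] by blast
  finally show ?thesis unfolding Bext0_def by (auto simp: res_def)
qed

text \<open>Conversely every BCH monomial of degree s is a form of degree s in the coordinates phi:
  by bch_mon_split it is a product of the norms phi 0, phi 3 and of one of the conjugate
  products x^q y = rho (phi 1 - theta phi 2), x y^q = rho^q (phi 1 - theta' phi 2).\<close>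
lemma phi_03: "phi 0 P = P 0 ^ q * P 0" "phi 3 P = P 1 ^ q * P 1"
  by (simp_all add: phi_def)

lemma phi_conj_products:
  "\<rho> * phi 1 P + (- (\<rho> * \<theta>)) * phi 2 P = P 0 ^ q * P 1"
  "\<rho> ^ q * phi 1 P + (- (\<rho> ^ q * \<theta>')) * phi 2 P = P 0 * P 1 ^ q"
proof -
  have "\<rho> * phi 1 P + (- (\<rho> * \<theta>)) * phi 2 P = \<rho> * (phi 1 P - \<theta> * phi 2 P)"
    by (simp add: algebra_simps)
  also have "\<dots> = (\<rho> * inverse \<rho>) * (P 0 ^ q * P 1)" by (simp add: phi_factor mult.assoc)
  finally show "\<rho> * phi 1 P + (- (\<rho> * \<theta>)) * phi 2 P = P 0 ^ q * P 1"
    using rho_nonzero by simp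
  have "\<rho> ^ q * phi 1 P + (- (\<rho> ^ q * \<theta>')) * phi 2 P = \<rho> ^ q * (phi 1 P - \<theta>' * phi 2 P)"
    by (simp add: algebra_simps)
  also have "\<dots> = (\<rho> ^ q * inverse \<rho> ^ q) * (P 0 * P 1 ^ q)" by (simp add: phi_factor_conj mult.assoc)
  finally show "\<rho> ^ q * phi 1 P + (- (\<rho> ^ q * \<theta>')) * phi 2 P = P 0 * P 1 ^ q"
    using rho_nonzero by (simp flip: power_mult_distrib)
qed

lemma product_in_forms3:
  assumes "L \<in> Forms3.forms 1" "i + d + d' = s"
  shows "(\<lambda>v::nat \<Rightarrow> 'b. v 0 ^ i * L v ^ d * v 3 ^ d') \<in> Forms3.forms s"
proof -
  have "(\<lambda>v::nat \<Rightarrow> 'b. v 0 ^ i * L v ^ d * v 3 ^ d') \<in> Forms3.forms (1 * i + 1 * d + 1 * d')"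
    by (intro Forms3.forms_mult Forms3.forms_pow coord_in_forms3 assms(1)) auto
  thus ?thesis using assms(2) by simp
qed

lemma bch_mon_as_form:
  assumes k: "k \<in> {0..s}\<times>{0..s}"
  shows "\<exists>G\<in>Forms3.forms s. \<forall>P. bch_mon q s k P = G (\<lambda>i. phi i P)"
proof -
  obtain i j where ij: "k = (i,j)" by (cases k)
  show ?thesis
  proof (cases "i \<le> j")
    case True
    let ?G = "\<lambda>v::nat \<Rightarrow> 'b. v 0 ^ i * (\<rho> * v 1 + (- (\<rho> * \<theta>)) * v 2) ^ (j - i) * v 3 ^ (s - j)"
    have js: "j \<le> s" using k ij by auto
    have "?G \<in> Forms3.forms s" using True js by (intro product_in_forms3 linear_in_forms3) auto
    moreover have "bch_mon q s k P = ?G (\<lambda>i. phi i P)" for P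
      by (simp only: ij bch_mon_split(1)[OF True js] phi_03 phi_conj_products)
    ultimately show ?thesis by (intro bexI[where x = ?G]) auto
  next
    case False
    let ?G = "\<lambda>v::nat \<Rightarrow> 'b. v 0 ^ j * (\<rho> ^ q * v 1 + (- (\<rho> ^ q * \<theta>')) * v 2) ^ (i - j) * v 3 ^ (s - i)"
    have ji: "j \<le> i" and "is": "i \<le> s" using False k ij by auto
    have "?G \<in> Forms3.forms s" using ji "is" by (intro product_in_forms3 linear_in_forms3) auto
    moreover have "bch_mon q s k P = ?G (\<lambda>i. phi i P)" for P
      by (simp only: ij bch_mon_split(2)[OF ji "is"] phi_03 phi_conj_products)
    ultimately show ?thesis by (intro bexI[where x = ?G]) auto
  qed
qed

lemma BCH_as_form:
  assumes "h \<in> BCH.forms s"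
  shows "\<exists>\<beta>. \<forall>P. h P = (\<Sum>e\<in>monomials 3 s. \<beta> e * mon3 s e (\<lambda>i. phi i P))"
proof -
  obtain \<alpha> where h: "h = (\<lambda>P. \<Sum>k\<in>{0..s}\<times>{0..s}. \<alpha> k * bch_mon q s k P)"
    using assms by (rule BCH.formsE)
  have "\<forall>k\<in>{0..s}\<times>{0..s}. \<exists>G\<in>Forms3.forms s. \<forall>P. bch_mon q s k P = G (\<lambda>i. phi i P)"
    using bch_mon_as_form by blast
  then obtain G where G: "\<And>k. k \<in> {0..s}\<times>{0..s} \<Longrightarrow>
      G k \<in> Forms3.forms s \<and> (\<forall>P. bch_mon q s k P = G k (\<lambda>i. phi i P))"
    by metis
  have "(\<lambda>v. \<Sum>k\<in>{0..s}\<times>{0..s}. \<alpha> k * G k v) \<in> Forms3.forms s"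
    by (intro Forms3.forms_sum Forms3.forms_smult) (use G in blast)
  then obtain \<beta> where \<beta>: "(\<lambda>v. \<Sum>k\<in>{0..s}\<times>{0..s}. \<alpha> k * G k v) = (\<lambda>v. \<Sum>e\<in>monomials 3 s. \<beta> e * mon3 s e v)"
    by (rule Forms3.formsE)
  have "h P = (\<Sum>e\<in>monomials 3 s. \<beta> e * mon3 s e (\<lambda>i. phi i P))" for P
  proof -
    have "h P = (\<Sum>k\<in>{0..s}\<times>{0..s}. \<alpha> k * G k (\<lambda>i. phi i P))"
      unfolding h using G by (intro sum.cong) simp_all
    also have "\<dots> = (\<Sum>e\<in>monomials 3 s. \<beta> e * mon3 s e (\<lambda>i. phi i P))"
      using fun_cong[OF \<beta>, of "\<lambda>i. phi i P"] by simp
    finally show ?thesis .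
  qed
  thus ?thesis by blast
qed

text \<open>Galois descent with an element l of trace 1: if the F_q-valued function w is given on A
  by a form with coefficients beta over F_(q^2), then w = T(l w) is given by the form with the
  F_q-rational coefficients T(l beta) = l beta + (l beta)^q, because the monomials in tau are
  F_q-rational.\<close>
lemma descend_form:
  assumes w: "\<And>P. P \<in> A \<Longrightarrow> emb (w P) = (\<Sum>e\<in>monomials 3 s. \<beta> e * mon3 s e (\<lambda>i. phi i P))"
  shows "\<exists>g\<in>Forms3.forms s. \<forall>P\<in>A. w P = g (tau P)"
proof -
  obtain l :: 'b where l: "l + l ^ q = 1" using exists_trace_one by blast
  define \<gamma> where "\<gamma> e = inv emb (l * \<beta> e + (l * \<beta> e) ^ q)" for e
  have emb_\<gamma>: "emb (\<gamma> e) = l * \<beta> e + (l * \<beta> e) ^ q" for e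
    unfolding \<gamma>_def by (rule emb_inv_emb) (rule trace_frob)
  define g where "g = (\<lambda>v. \<Sum>e\<in>monomials 3 s. \<gamma> e * mon3 s e v)"
  have "g \<in> Forms3.forms s" unfolding g_def by (rule Forms3.formsI) simp
  moreover have "w P = g (tau P)" if P: "P \<in> A" for P
  proof -
    define M where "M e = emb (mon3 s e (tau P))" for e
    have M_frob: "M e ^ q = M e" for e unfolding M_def by (rule emb_frob)
    have "emb (w P) = (l + l ^ q) * emb (w P)" using l by simp
    also have "\<dots> = l * emb (w P) + (l * emb (w P)) ^ q"
      by (simp add: power_mult_distrib emb_frob algebra_simps)
    also have "\<dots> = (\<Sum>e\<in>monomials 3 s. (l * \<beta> e + (l * \<beta> e) ^ q) * M e)"
      by (simp add: w[OF P] M_def emb_mon3_tau[symmetric] sum_distrib_left frob_sum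
          power_mult_distrib M_frob[unfolded M_def] sum.distrib algebra_simps)
    also have "\<dots> = emb (g (tau P))"
      by (simp add: g_def emb_sum emb_mult emb_\<gamma> M_def)
    finally show ?thesis by simp
  qed
  ultimately show ?thesis by blast
qed

lemma Bext0_as_pullback:
  assumes "cw \<in> Bext0 emb q s"
  shows "\<exists>g\<in>Forms3.forms s. \<forall>P\<in>proj_points 1. cw P = g (tau P)"
proof -
  have "emb \<circ> cw \<in> Bext q s" using assms unfolding Bext0_def by blast
  then obtain h where hc: "emb \<circ> cw = res (proj_points 1) h" and h: "h \<in> BCH.forms s"
    unfolding Bext_forms by blast
  obtain \<beta> where \<beta>: "\<And>P. h P = (\<Sum>e\<in>monomials 3 s. \<beta> e * mon3 s e (\<lambda>i. phi i P))"
    using BCH_as_form[OF h] by blast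
  show ?thesis
  proof (rule descend_form)
    fix P :: "nat \<Rightarrow> 'b" assume "P \<in> proj_points 1"
    thus "emb (cw P) = (\<Sum>e\<in>monomials 3 s. \<beta> e * mon3 s e (\<lambda>i. phi i P))"
      using fun_cong[OF hc, of P] by (simp add: res_def \<beta>)
  qed
qed

definition sigma :: "(nat \<Rightarrow> 'a) \<Rightarrow> nat \<Rightarrow> 'b" where
  "sigma = inv_into (proj_points 1) tau"

lemma sigma_bij: "bij_betw sigma (elliptic_quadric a b c) (proj_points 1)"
  unfolding sigma_def by (rule bij_betw_inv_into[OF tau_bij])

lemma tau_sigma: "e \<in> elliptic_quadric a b c \<Longrightarrow> tau (sigma e) = e"
  using tau_bij unfolding sigma_def bij_betw_def by (metis f_inv_into_f)

lemma sigma_in_P1: "e \<in> elliptic_quadric a b c \<Longrightarrow> sigma e \<in> proj_points 1"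
  using sigma_bij by (auto simp: bij_betw_def)

lemma sigma_tau: "P \<in> proj_points 1 \<Longrightarrow> sigma (tau P) = P"
  unfolding sigma_def using tau_inj by simp

lemma eval_code_eq_Bext0:
  "eval_code 3 (elliptic_quadric a b c) s
     = (\<lambda>d. res (elliptic_quadric a b c) (d \<circ> sigma)) ` Bext0 emb q s"
  (is "?C = ?f ` _")
proof (intro set_eqI iffI)
  fix x assume "x \<in> ?C"
  then obtain g where x: "x = res (elliptic_quadric a b c) g" and g: "g \<in> Forms3.forms s"
    unfolding eval_code_forms by blast
  have "x = ?f (res (proj_points 1) (\<lambda>P. g (tau P)))"
    unfolding x by (auto simp: res_def fun_eq_iff sigma_in_P1 tau_sigma)
  thus "x \<in> ?f ` Bext0 emb q s" using pullback_in_Bext0[OF g] by blast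
next
  fix x assume "x \<in> ?f ` Bext0 emb q s"
  then obtain d where x: "x = ?f d" and d: "d \<in> Bext0 emb q s" by blast
  obtain g where g: "g \<in> Forms3.forms s" and dg: "\<forall>P\<in>proj_points 1. d P = g (tau P)"
    using Bext0_as_pullback[OF d] by blast
  have "x = res (elliptic_quadric a b c) g"
    using dg unfolding x by (auto simp: res_def fun_eq_iff sigma_in_P1 tau_sigma)
  thus "x \<in> ?C" unfolding eval_code_forms using g by blast
qed

lemma perm_equiv_E_Bext0:
  "perm_equiv (elliptic_quadric a b c) (eval_code 3 (elliptic_quadric a b c) s)
     (proj_points 1 :: (nat \<Rightarrow> 'b) set) (Bext0 emb q s)"
  unfolding perm_equiv_def using sigma_bij eval_code_eq_Bext0 by blast

end

section \<open>The minimum distance\<close>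

lemma hweight_res: "hweight X (res X g) = card {e\<in>X. g e \<noteq> 0}"
  unfolding hweight_def res_def by (intro arg_cong[where f=card]) auto

context elliptic_param
begin

text \<open>On the affine point (1 : t) a BCH monomial of degree s is the power t^(bch_exp s k); only
  (0, 0) gives the top exponent s + q s.  So a BCH form restricts to a polynomial bch_poly.\<close>
definition bch_exp :: "nat \<Rightarrow> nat \<times> nat \<Rightarrow> nat" where
  "bch_exp s k = (case k of (i,j) \<Rightarrow> (s - i) + q * (s - j))"

lemma bch_mon_pt1: "bch_mon q s k (pt1 t) = t ^ bch_exp s k"
  by (cases k) (simp add: bch_mon_def bch_exp_def pt1_def)

lemma bch_mon_pinf: "bch_mon q s k pinf = (if k = (0,0) then 1 else 0)"
  using q_ge2 by (cases k) (auto simp: bch_mon_def pinf_def)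

definition bch_poly :: "nat \<Rightarrow> (nat \<times> nat \<Rightarrow> 'b) \<Rightarrow> 'b poly" where
  "bch_poly s \<alpha> = (\<Sum>k\<in>{0..s}\<times>{0..s}. monom (\<alpha> k) (bch_exp s k))"

lemma poly_bch_poly: "poly (bch_poly s \<alpha>) t = (\<Sum>k\<in>{0..s}\<times>{0..s}. \<alpha> k * bch_mon q s k (pt1 t))"
  by (simp add: bch_poly_def poly_sum poly_monom bch_mon_pt1)

lemma coeff_bch_poly:
  "coeff (bch_poly s \<alpha>) n = (\<Sum>k\<in>{0..s}\<times>{0..s}. if bch_exp s k = n then \<alpha> k else 0)"
  by (simp add: bch_poly_def coeff_sum coeff_monom)

lemma bch_exp_le: "bch_exp s k \<le> s + q * s"
  by (cases k) (simp add: bch_exp_def add_mono)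

lemma bch_exp_top: "k \<in> {0..s}\<times>{0..s} \<Longrightarrow> bch_exp s k = s + q * s \<longleftrightarrow> k = (0,0)"
proof -
  assume k: "k \<in> {0..s}\<times>{0..s}"
  obtain i j where ij: "k = (i,j)" by (cases k)
  have "(s - i) + q * (s - j) = s + q * s \<Longrightarrow> i = 0 \<and> j = 0"
  proof -
    assume h: "(s - i) + q * (s - j) = s + q * s"
    have "s - i \<le> s" "q * (s - j) \<le> q * s" by simp_all
    hence "s - i = s" "q * (s - j) = q * s" using h by linarith+
    thus ?thesis using k q_ge2 ij by auto
  qed
  thus ?thesis by (auto simp: bch_exp_def ij)
qed

lemma coeff_bch_poly_top: "coeff (bch_poly s \<alpha>) (s + q * s) = \<alpha> (0,0)"
proof -
  have "coeff (bch_poly s \<alpha>) (s + q * s) = (\<Sum>k\<in>{0..s}\<times>{0..s}. if k = (0,0) then \<alpha> k else 0)"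
    unfolding coeff_bch_poly by (intro sum.cong) (auto simp: bch_exp_top)
  thus ?thesis by (simp add: sum.delta)
qed

lemma coeff_bch_poly_above: "n > s + q * s \<Longrightarrow> coeff (bch_poly s \<alpha>) n = 0"
proof -
  assume "n > s + q * s"
  hence "bch_exp s k \<noteq> n" for k using bch_exp_le[of s k] by linarith
  thus ?thesis unfolding coeff_bch_poly by simp
qed

lemma degree_bch_poly:
  assumes "bch_poly s \<alpha> \<noteq> 0"
  shows "degree (bch_poly s \<alpha>) + (if \<alpha> (0,0) = 0 then 1 else 0) \<le> s + q * s"
proof (cases "\<alpha> (0,0) = 0")
  case True
  have "degree (bch_poly s \<alpha>) < s + q * s"
  proof (rule ccontr)
    assume "\<not> degree (bch_poly s \<alpha>) < s + q * s"
    hence "coeff (bch_poly s \<alpha>) (degree (bch_poly s \<alpha>)) = 0"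
      using True coeff_bch_poly_top[of s \<alpha>] coeff_bch_poly_above[of s _ \<alpha>]
      by (cases "degree (bch_poly s \<alpha>) = s + q * s") auto
    thus False using assms by simp
  qed
  thus ?thesis using True by simp
next
  case False
  have "degree (bch_poly s \<alpha>) \<le> s + q * s" by (rule degree_le) (use coeff_bch_poly_above in auto)
  thus ?thesis using False by simp
qed

lemma card_zeros_BCH_form:
  assumes h: "h \<in> BCH.forms s" and nz: "\<exists>P\<in>proj_points 1. h P \<noteq> 0"
  shows "card {P\<in>proj_points 1. h P = 0} \<le> s * (q + 1)"
proof -
  obtain \<alpha> where h_eq: "h = (\<lambda>P. \<Sum>k\<in>{0..s}\<times>{0..s}. \<alpha> k * bch_mon q s k P)"
    using h by (rule BCH.formsE)
  define p where "p = bch_poly s \<alpha>"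
  define Z where "Z = pt1 ` {t. poly p t = 0} \<union> (if \<alpha> (0,0) = 0 then {pinf} else {})"
  have h_pt1: "h (pt1 t) = poly p t" for t by (simp add: h_eq p_def poly_bch_poly)
  have h_pinf: "h pinf = \<alpha> (0,0)"
    unfolding h_eq by (simp add: bch_mon_pinf if_distrib sum.delta cong: if_cong)
  have p0: "p \<noteq> 0"
  proof
    assume "p = 0"
    hence "\<alpha> (0,0) = 0" using coeff_bch_poly_top[of s \<alpha>] by (simp add: p_def)
    thus False using nz \<open>p = 0\<close> h_pt1 h_pinf unfolding P1_char by auto
  qed
  have "{P\<in>proj_points 1. h P = 0} \<subseteq> Z"
    unfolding Z_def P1_char using h_pt1 h_pinf by auto
  hence "card {P\<in>proj_points 1. h P = 0} \<le> card Z"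
    using p0 by (intro card_mono) (auto simp: Z_def intro: poly_roots_finite)
  also have "\<dots> \<le> card (pt1 ` {t. poly p t = 0}) + (if \<alpha> (0,0) = 0 then 1 else 0)"
    using poly_roots_finite[OF p0] by (auto simp: Z_def card_insert_if)
  also have "\<dots> \<le> card {t. poly p t = 0} + (if \<alpha> (0,0) = 0 then 1 else 0)"
    using card_image_le[OF poly_roots_finite[OF p0], of pt1] by simp
  also have "\<dots> \<le> degree p + (if \<alpha> (0,0) = 0 then 1 else 0)"
    using card_poly_roots_bound[OF p0] by simp
  also have "\<dots> \<le> s + q * s" using degree_bch_poly p0 unfolding p_def by blast
  also have "\<dots> = s * (q + 1)" by (simp add: algebra_simps)
  finally show ?thesis .
qed

lemma weight_pullback:
  "card {e\<in>elliptic_quadric a b c. g e \<noteq> 0} = q ^ 2 + 1 - card {P\<in>proj_points 1. g (tau P) = 0}"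
proof -
  have "{e\<in>elliptic_quadric a b c. g e \<noteq> 0} = tau ` {P\<in>proj_points 1. g (tau P) \<noteq> 0}"
    using tau_bij unfolding bij_betw_def by auto
  moreover have "inj_on tau {P\<in>proj_points 1. g (tau P) \<noteq> 0}"
    using tau_inj by (rule inj_on_subset) auto
  moreover have "card {P\<in>proj_points 1. g (tau P) \<noteq> 0}
      = card (proj_points 1 :: (nat \<Rightarrow> 'b) set) - card {P\<in>proj_points 1. g (tau P) = 0}"
  proof -
    have "{P\<in>proj_points 1. g (tau P) \<noteq> 0}
        = proj_points 1 - {P\<in>(proj_points 1 :: (nat \<Rightarrow> 'b) set). g (tau P) = 0}" by auto
    thus ?thesis by (simp add: card_Diff_subset finite_subset[OF _ finite_P1])
  qed
  ultimately show ?thesis using card_P1[where 'b='b] card_ext by (simp add: card_image)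
qed

lemma weight_lower_bound:
  assumes x: "x \<in> eval_code 3 (elliptic_quadric a b c) s" and nz: "x \<noteq> (\<lambda>_. 0)"
  shows "hweight (elliptic_quadric a b c) x \<ge> q ^ 2 + 1 - s * (q + 1)"
proof -
  obtain g where xg: "x = res (elliptic_quadric a b c) g" and g: "g \<in> Forms3.forms s"
    using x unfolding eval_code_forms by blast
  obtain e where e: "e \<in> elliptic_quadric a b c" "g e \<noteq> 0"
    using nz unfolding xg res_def by (auto simp: fun_eq_iff split: if_splits)
  have "emb (g (tau (sigma e))) \<noteq> 0" "sigma e \<in> proj_points 1"
    using e tau_sigma sigma_in_P1 by auto
  hence "card {P\<in>proj_points 1. emb (g (tau P)) = 0} \<le> s * (q + 1)"
    using card_zeros_BCH_form[OF pullback_in_BCH[OF g]] by blast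
  thus ?thesis unfolding xg hweight_res weight_pullback by simp
qed

text \<open>The bound is attained by the product of s planes x3 = lambda x0 with distinct nonzero
  lambda in F_q: its zeros on E are the s (q + 1) affine points whose norm is one of the lambda.\<close>
lemma weight_attained:
  assumes sq: "s \<le> q - 1"
  shows "\<exists>x\<in>eval_code 3 (elliptic_quadric a b c) s. x \<noteq> (\<lambda>_. 0) \<and>
           hweight (elliptic_quadric a b c) x = q ^ 2 + 1 - s * (q + 1)"
proof -
  have "card {..<s} \<le> card (UNIV - {0::'a})" using sq by (simp add: card_Diff_singleton_if q_def)
  then obtain lam :: "nat \<Rightarrow> 'a" where lam: "lam ` {..<s} \<subseteq> UNIV - {0}" "inj_on lam {..<s}"
    using card_le_inj[of "{..<s}" "UNIV - {0::'a}"] by auto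
  define g where "g = (\<lambda>v::nat \<Rightarrow> 'a. \<Prod>k\<in>{..<s}. (v 3 - lam k * v 0))"
  have "(\<lambda>v::nat \<Rightarrow> 'a. v 3 - lam k * v 0) \<in> Forms3.forms 1" for k
    using linear_in_forms3[of 3 0 1 "- lam k"] by simp
  hence "g \<in> Forms3.forms (\<Sum>k\<in>{..<s}. 1)" unfolding g_def by (intro Forms3.forms_prod)
  hence gs: "g \<in> Forms3.forms s" by simp
  define Z where "Z = (\<Union>k\<in>{..<s}. {t::'b. t ^ q * t = emb (lam k)})"
  have g_pinf: "g (tau pinf) \<noteq> 0" by (simp add: g_def tau_pinf)
  have "g (tau (pt1 t)) = 0 \<longleftrightarrow> t \<in> Z" for t
  proof -
    have "g (tau (pt1 t)) = 0 \<longleftrightarrow> (\<exists>k\<in>{..<s}. tau (pt1 t) 3 = lam k)"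
      by (simp add: g_def tau_pt1)
    thus ?thesis by (simp add: Z_def flip: tau_pt1(2))
  qed
  hence zeros: "{P\<in>proj_points 1. g (tau P) = 0} = pt1 ` Z"
    using g_pinf unfolding P1_char by auto
  have "card Z = (\<Sum>k\<in>{..<s}. card {t::'b. t ^ q * t = emb (lam k)})"
    unfolding Z_def using lam(2) by (intro card_UN_disjoint) (auto simp: inj_on_def)
  also have "\<dots> = (\<Sum>k\<in>{..<s}. q + 1)"
    by (intro sum.cong refl card_norm_fibre) (use lam(1) in auto)
  finally have cZ: "card (pt1 ` Z) = s * (q + 1)"
    by (simp add: card_image[OF inj_on_subset[OF pt1_inj]])
  define x where "x = res (elliptic_quadric a b c) g"
  have "x \<in> eval_code 3 (elliptic_quadric a b c) s" unfolding x_def eval_code_forms using gs by blast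
  moreover have "x \<noteq> (\<lambda>_. 0)"
    using tau_in_E[OF pinf_in_P1] g_pinf unfolding x_def res_def by (metis (full_types))
  moreover have "hweight (elliptic_quadric a b c) x = q ^ 2 + 1 - s * (q + 1)"
    unfolding x_def hweight_res weight_pullback zeros cZ ..
  ultimately show ?thesis by blast
qed

lemma min_dist_E:
  assumes "s \<le> q - 1"
  shows "min_dist (elliptic_quadric a b c) (eval_code 3 (elliptic_quadric a b c) s)
           = q ^ 2 + 1 - s * (q + 1)"
proof -
  define S where "S = {hweight (elliptic_quadric a b c) x | x.
                         x \<in> eval_code 3 (elliptic_quadric a b c) s \<and> x \<noteq> (\<lambda>_. 0)}"
  have "S \<subseteq> {..card (elliptic_quadric a b c)}"
    unfolding S_def hweight_def using finite_E by (auto intro!: card_mono)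
  hence "finite S" by (rule finite_subset) simp
  hence "Min S = q ^ 2 + 1 - s * (q + 1)"
    using weight_lower_bound weight_attained[OF assms] unfolding S_def by (intro Min_eqI) force+
  thus ?thesis unfolding min_dist_def S_def .
qed

end

section \<open>The dimension\<close>

interpretation FunVS: vector_space "\<lambda>(k::'a::field) (f::'i \<Rightarrow> 'a) x. k * f x"
  by unfold_locales (simp_all add: fun_eq_iff algebra_simps)

lemma card_span_independent:
  fixes B :: "('i \<Rightarrow> 'a::{field,finite}) set"
  assumes fB: "finite B" and ind: "FunVS.independent B"
  shows "card (FunVS.span B) = card (UNIV :: 'a set) ^ card B"
proof -
  define L where "L = (\<lambda>u. \<Sum>v\<in>B. (\<lambda>x. u v * v x))"
  have "FunVS.span B = range L" unfolding L_def by (rule FunVS.span_finite[OF fB])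
  also have "\<dots> = L ` (B \<rightarrow>\<^sub>E UNIV)"
  proof
    show "range L \<subseteq> L ` (B \<rightarrow>\<^sub>E UNIV)"
    proof
      fix y assume "y \<in> range L"
      then obtain u where y: "y = L u" by blast
      have "L (restrict u B) = L u" unfolding L_def by (intro sum.cong) auto
      moreover have "restrict u B \<in> B \<rightarrow>\<^sub>E UNIV" by simp
      ultimately show "y \<in> L ` (B \<rightarrow>\<^sub>E UNIV)" using y by (metis image_eqI)
    qed
  qed auto
  finally have span: "FunVS.span B = L ` (B \<rightarrow>\<^sub>E UNIV)" .
  have "inj_on L (B \<rightarrow>\<^sub>E UNIV)"
  proof (rule inj_onI)
    fix u u' assume u: "u \<in> B \<rightarrow>\<^sub>E UNIV" and u': "u' \<in> B \<rightarrow>\<^sub>E UNIV" and eq: "L u = L u'"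
    have "(\<Sum>v\<in>B. (\<lambda>x. (u v - u' v) * v x)) = (\<Sum>v\<in>B. (\<lambda>x. u v * v x) - (\<lambda>x. u' v * v x))"
      by (intro sum.cong) (auto simp: fun_eq_iff algebra_simps)
    also have "\<dots> = L u - L u'" unfolding L_def by (simp add: sum_subtractf)
    finally have "(\<Sum>v\<in>B. (\<lambda>x. (u v - u' v) * v x)) = 0" using eq by simp
    hence "\<forall>v\<in>B. u v - u' v = 0"
      using FunVS.independentD[OF ind fB subset_refl, of "\<lambda>v. u v - u' v"] by blast
    thus "u = u'" using u u' by (intro PiE_ext) auto
  qed
  hence "card (FunVS.span B) = card (B \<rightarrow>\<^sub>E (UNIV :: 'a set))" by (simp add: span card_image)
  also have "\<dots> = card (UNIV :: 'a set) ^ card B" using fB by (simp add: card_PiE)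
  finally show ?thesis .
qed

lemma card_subspace:
  fixes V :: "('i \<Rightarrow> 'a::{field,finite}) set"
  assumes fV: "finite V" and sV: "FunVS.subspace V"
  shows "card V = card (UNIV :: 'a set) ^ FunVS.dim V"
proof -
  obtain B where B: "B \<subseteq> V" "FunVS.independent B" "V \<subseteq> FunVS.span B" "card B = FunVS.dim V"
    using FunVS.basis_exists by blast
  have "FunVS.span B \<subseteq> V" using B(1) sV by (rule FunVS.span_minimal)
  hence "V = FunVS.span B" using B(3) by blast
  moreover have fB: "finite B" using B(1) fV by (rule finite_subset)
  ultimately show ?thesis using card_span_independent[OF fB B(2)] B(4) by simp
qed

lemma eval_code_subspace: "FunVS.subspace (eval_code 3 X s :: ((nat \<Rightarrow> 'a::field) \<Rightarrow> 'a) set)"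
proof (rule FunVS.subspaceI)
  show "0 \<in> eval_code 3 X s" unfolding eval_code_forms
    by (rule CollectI, rule exI[of _ "\<lambda>_. 0"]) (auto simp: res_def fun_eq_iff Forms3.forms_zero)
next
  fix x y assume "x \<in> eval_code 3 X s" "y \<in> eval_code 3 X s"
  then obtain g h where "x = res X g" "g \<in> Forms3.forms s" "y = res X h" "h \<in> Forms3.forms s"
    unfolding eval_code_forms by blast
  thus "x + y \<in> eval_code 3 X s" unfolding eval_code_forms
    by (intro CollectI exI[of _ "\<lambda>v. g v + h v"]) (auto simp: res_def fun_eq_iff Forms3.forms_add)
next
  fix c :: 'a and x assume "x \<in> eval_code 3 X s"
  then obtain g where "x = res X g" "g \<in> Forms3.forms s" unfolding eval_code_forms by blast
  thus "(\<lambda>y. c * x y) \<in> eval_code 3 X s" unfolding eval_code_forms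
    by (intro CollectI exI[of _ "\<lambda>v. c * g v"]) (auto simp: res_def fun_eq_iff Forms3.forms_smult)
qed

lemma eval_code_finite:
  assumes "finite X"
  shows "finite (eval_code 3 X s :: ((nat \<Rightarrow> 'a::{field,finite}) \<Rightarrow> 'a) set)"
proof -
  have "eval_code 3 X s \<subseteq> (\<lambda>f e. if e \<in> X then f e else 0) ` (X \<rightarrow>\<^sub>E (UNIV :: 'a set))"
  proof
    fix x assume "x \<in> eval_code 3 X s"
    then obtain g where x: "x = res X g" unfolding eval_code_def by blast
    show "x \<in> (\<lambda>f e. if e \<in> X then f e else 0) ` (X \<rightarrow>\<^sub>E UNIV)"
      by (rule image_eqI[of _ _ "restrict g X"]) (auto simp: x res_def)
  qed
  thus ?thesis by (rule finite_subset) (intro finite_imageI finite_PiE assms, auto)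
qed

context elliptic_param
begin

text \<open>Reindexing along sigma is injective on B0ext(s), whose words vanish outside P^1.\<close>
lemma card_eval_code_eq_Bext0:
  "card (eval_code 3 (elliptic_quadric a b c) s) = card (Bext0 emb q s)"
proof -
  have "inj_on (\<lambda>d. res (elliptic_quadric a b c) (d \<circ> sigma)) (Bext0 emb q s)"
  proof (rule inj_onI)
    fix d d' assume d: "d \<in> Bext0 emb q s" and d': "d' \<in> Bext0 emb q s"
      and eq: "res (elliptic_quadric a b c) (d \<circ> sigma) = res (elliptic_quadric a b c) (d' \<circ> sigma)"
    show "d = d'"
    proof
      fix P show "d P = d' P"
      proof (cases "P \<in> proj_points 1")
        case True
        thus ?thesis using fun_cong[OF eq, of "tau P"] tau_in_E sigma_tau by (simp add: res_def)
      next
        case False thus ?thesis using d d' by (simp add: Bext0_def)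
      qed
    qed
  qed
  thus ?thesis unfolding eval_code_eq_Bext0 by (rule card_image)
qed

abbreviation bch_index :: "nat \<Rightarrow> (nat \<times> nat) set" where "bch_index s \<equiv> {0..s}\<times>{0..s}"

definition bch_form :: "nat \<Rightarrow> (nat \<times> nat \<Rightarrow> 'b) \<Rightarrow> (nat \<Rightarrow> 'b) \<Rightarrow> 'b" where
  "bch_form s \<alpha> = (\<lambda>P. \<Sum>k\<in>bch_index s. \<alpha> k * bch_mon q s k P)"

lemma bch_form_diff: "bch_form s (\<lambda>k. \<alpha> k - \<beta> k) P = bch_form s \<alpha> P - bch_form s \<beta> P"
  unfolding bch_form_def by (simp add: sum_subtractf algebra_simps)

text \<open>For s < q the exponents (s - i) + q (s - j) are distinct base-q expansions.\<close>
lemma bch_exp_inj: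
  assumes "s < q" "k \<in> bch_index s" "k' \<in> bch_index s" "bch_exp s k = bch_exp s k'"
  shows "k = k'"
proof -
  obtain i j i' j' where k: "k = (i,j)" and k': "k' = (i',j')" by (cases k, cases k')
  have e: "(s - i) + q * (s - j) = (s - i') + q * (s - j')" using assms(4) by (simp add: bch_exp_def k k')
  have "s - i < q" "s - i' < q" using assms(1) by auto
  hence "s - i = s - i' \<and> s - j = s - j'"
    using arg_cong[OF e, of "\<lambda>n. n mod q"] arg_cong[OF e, of "\<lambda>n. n div q"] by simp
  thus ?thesis using assms(2,3) k k' by auto
qed

text \<open>For s + 2 \<le> q the BCH monomials of degree s are linearly independent as functions on the
  affine points: the polynomial bch_poly has degree s (q + 1) < q^2 and distinct exponents.\<close>
lemma bch_form_coeffs_unique: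
  assumes sq: "s + 2 \<le> q" and zero: "\<And>t. bch_form s \<beta> (pt1 t) = 0" and k: "k \<in> bch_index s"
  shows "\<beta> k = 0"
proof -
  define p where "p = bch_poly s \<beta>"
  have "p = 0"
  proof (rule ccontr)
    assume p0: "p \<noteq> 0"
    have "s + q * s = (q + 1) * s" by (simp add: algebra_simps)
    also have "\<dots> \<le> (q + 1) * (q - 2)" using sq by (intro mult_left_mono) auto
    also have "\<dots> < q * q" using q_ge2 by (cases q) (auto simp: algebra_simps)
    finally have "degree p < q ^ 2"
      using coeff_bch_poly_above[of s] unfolding p_def power2_eq_square
      by (intro le_less_trans[OF degree_le]) auto
    moreover have "card (UNIV::'b set) \<le> degree p"
      using zero by (intro card_roots_le_degree[OF p0]) (simp_all add: p_def poly_bch_poly bch_form_def)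
    ultimately show False using card_ext by simp
  qed
  moreover have "coeff p (bch_exp s k) = \<beta> k"
  proof -
    have "coeff p (bch_exp s k) = (\<Sum>k'\<in>bch_index s. if k' = k then \<beta> k' else 0)"
      unfolding p_def coeff_bch_poly using bch_exp_inj[of s _ k] k sq by (intro sum.cong) auto
    thus ?thesis using k by (simp add: sum.delta)
  qed
  ultimately show "\<beta> k = 0" by simp
qed

text \<open>The Frobenius maps the BCH monomial (i, j) to (j, i), since x^(q^2) = x.\<close>
lemma bch_mon_frob: "k \<in> bch_index s \<Longrightarrow> bch_mon q s k (P :: nat \<Rightarrow> 'b) ^ q = bch_mon q s (prod.swap k) P"
proof -
  assume k: "k \<in> bch_index s"
  obtain i j where ij: "k = (i,j)" by (cases k)
  have frob_exp: "(x::'b) ^ (q * (i + q * j)) = x ^ (j + q * i)" for x i j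
  proof -
    have e: "q * (i + q * j) = q * i + (q * q) * j" by (simp add: algebra_simps)
    have "x ^ (q * (i + q * j)) = x ^ (q * i) * (x ^ (q * q)) ^ j"
      by (simp only: e power_add power_mult)
    also have "x ^ (q * q) = x" using frob_frob[of x] by (simp add: power_mult)
    finally show ?thesis by (simp add: power_add algebra_simps)
  qed
  have "bch_mon q s k P ^ q = P 0 ^ (q * (i + q * j)) * P 1 ^ (q * ((s - i) + q * (s - j)))"
    by (simp add: bch_mon_def ij power_mult_distrib power_mult[symmetric] mult.commute)
  also have "\<dots> = P 0 ^ (j + q * i) * P 1 ^ ((s - j) + q * (s - i))"
    by (simp only: frob_exp)
  finally show ?thesis by (simp add: bch_mon_def ij)
qed

lemma bch_form_frob: "bch_form s \<alpha> P ^ q = bch_form s (\<lambda>k. \<alpha> (prod.swap k) ^ q) P"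
proof -
  have "bch_form s \<alpha> P ^ q = (\<Sum>k\<in>bch_index s. \<alpha> k ^ q * bch_mon q s (prod.swap k) P)"
    unfolding bch_form_def frob_sum by (intro sum.cong) (auto simp: power_mult_distrib bch_mon_frob)
  also have "\<dots> = (\<Sum>k\<in>bch_index s. \<alpha> (prod.swap k) ^ q * bch_mon q s k P)"
    by (rule sum.reindex_bij_witness[of _ prod.swap prod.swap]) auto
  finally show ?thesis by (simp add: bch_form_def)
qed

definition hermitian :: "nat \<Rightarrow> (nat \<times> nat \<Rightarrow> 'b) \<Rightarrow> bool" where
  "hermitian s \<alpha> \<longleftrightarrow> (\<forall>k\<in>bch_index s. \<alpha> (prod.swap k) = \<alpha> k ^ q)"

lemma hermitian_form_frob: "hermitian s \<alpha> \<Longrightarrow> bch_form s \<alpha> P ^ q = bch_form s \<alpha> P"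
  unfolding bch_form_frob unfolding bch_form_def hermitian_def
  by (intro sum.cong refl) (metis frob_frob mem_Times_iff swap_simp prod.collapse)

text \<open>Conversely, a BCH form that is F_q-valued on the affine points has Hermitian coefficients,
  by uniqueness of coefficients applied to the form minus its Frobenius conjugate.\<close>
lemma frob_fixed_hermitian:
  assumes sq: "s + 2 \<le> q" and fixed: "\<And>t. bch_form s \<alpha> (pt1 t) ^ q = bch_form s \<alpha> (pt1 t)"
  shows "hermitian s \<alpha>"
proof -
  have "bch_form s (\<lambda>k. \<alpha> k - \<alpha> (prod.swap k) ^ q) (pt1 t) = 0" for t
    using fixed[of t] by (simp add: bch_form_diff bch_form_frob)
  hence "\<alpha> k = \<alpha> (prod.swap k) ^ q" if "k \<in> bch_index s" for k
    using bch_form_coeffs_unique[OF sq _ that] by fastforce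
  thus ?thesis unfolding hermitian_def
    by (metis frob_frob mem_Times_iff swap_simp prod.collapse)
qed

text \<open>Since theta is not in F_q, (x, y) |-> x + y theta is injective, hence bijective from F_q^2
  onto F_(q^2); re and im are the two coordinates of its inverse.\<close>
lemma theta_basis_unique:
  assumes "emb x + emb y * \<theta> = emb x' + emb y' * \<theta>" shows "x = x' \<and> y = y'"
proof (cases "y = y'")
  case True thus ?thesis using assms by simp
next
  case False
  have "emb (y' - y) * \<theta> = emb (x - x')" using assms by (simp add: emb_diff algebra_simps)
  hence "\<theta> = emb ((x - x') / (y' - y))" using False by (simp add: emb_divide field_simps)
  thus ?thesis using theta_outside by blast
qed

lemma theta_basis_exists: "\<exists>x y. z = emb x + emb y * \<theta>"
proof -
  define f where "f = (\<lambda>(x, y). emb x + emb y * \<theta>)"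
  have "inj f" unfolding f_def by (rule injI) (auto dest: theta_basis_unique)
  hence "card (range f) = card (UNIV :: ('a \<times> 'a) set)" by (simp add: card_image)
  also have "\<dots> = card (UNIV :: 'b set)"
    using card_ext by (simp add: card_cartesian_product q_def power2_eq_square flip: UNIV_Times_UNIV)
  finally have "range f = UNIV" by (intro card_subset_eq) auto
  thus ?thesis unfolding f_def by (metis (mono_tags, lifting) UNIV_I case_prod_beta rangeE)
qed

definition re :: "'b \<Rightarrow> 'a" where "re z = (SOME x. \<exists>y. z = emb x + emb y * \<theta>)"
definition im :: "'b \<Rightarrow> 'a" where "im z = (SOME y. z = emb (re z) + emb y * \<theta>)"

lemma re_im: "z = emb (re z) + emb (im z) * \<theta>"
proof -
  have "\<exists>y. z = emb (re z) + emb y * \<theta>" unfolding re_def by (rule someI_ex) (rule theta_basis_exists)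
  thus ?thesis unfolding im_def by (rule someI_ex)
qed

definition herm_coeffs :: "(nat \<times> nat \<Rightarrow> 'a) \<Rightarrow> nat \<times> nat \<Rightarrow> 'b" where
  "herm_coeffs \<beta> k = (case k of (i, j) \<Rightarrow>
     if i = j then emb (\<beta> (i, i))
     else if i < j then emb (\<beta> (i, j)) + emb (\<beta> (j, i)) * \<theta>
     else (emb (\<beta> (j, i)) + emb (\<beta> (i, j)) * \<theta>) ^ q)"

lemma herm_coeffs_hermitian: "hermitian s (herm_coeffs \<beta>)"
  unfolding hermitian_def
proof
  fix k :: "nat \<times> nat"
  obtain i j where ij: "k = (i,j)" by (cases k)
  show "herm_coeffs \<beta> (prod.swap k) = herm_coeffs \<beta> k ^ q"
    by (cases i j rule: linorder_cases) (auto simp: herm_coeffs_def ij emb_frob frob_frob)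
qed

lemma herm_coeffs_inj:
  assumes "\<beta> \<in> bch_index s \<rightarrow>\<^sub>E UNIV" "\<beta>' \<in> bch_index s \<rightarrow>\<^sub>E UNIV"
    and eq: "\<And>k. k \<in> bch_index s \<Longrightarrow> herm_coeffs \<beta> k = herm_coeffs \<beta>' k"
  shows "\<beta> = \<beta>'"
proof (rule PiE_ext[OF assms(1,2)])
  fix k assume k: "k \<in> bch_index s"
  obtain i j where ij: "k = (i,j)" by (cases k)
  have k': "(j,i) \<in> bch_index s" using k ij by auto
  show "\<beta> k = \<beta>' k"
  proof (cases i j rule: linorder_cases)
    case equal
    thus ?thesis using eq[OF k] by (simp add: herm_coeffs_def ij)
  next
    case less
    hence "emb (\<beta> (i,j)) + emb (\<beta> (j,i)) * \<theta> = emb (\<beta>' (i,j)) + emb (\<beta>' (j,i)) * \<theta>"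
      using eq[OF k] by (simp add: herm_coeffs_def ij)
    thus ?thesis using theta_basis_unique ij by blast
  next
    case greater
    hence "emb (\<beta> (j,i)) + emb (\<beta> (i,j)) * \<theta> = emb (\<beta>' (j,i)) + emb (\<beta>' (i,j)) * \<theta>"
      using eq[OF k'] by (simp add: herm_coeffs_def)
    thus ?thesis using theta_basis_unique ij by blast
  qed
qed

lemma hermitian_herm_coeffs:
  assumes "hermitian s \<alpha>"
  shows "\<exists>\<beta>\<in>bch_index s \<rightarrow>\<^sub>E UNIV. \<forall>k\<in>bch_index s. herm_coeffs \<beta> k = \<alpha> k"
proof -
  have herm: "k \<in> bch_index s \<Longrightarrow> \<alpha> (prod.swap k) = \<alpha> k ^ q" for k
    using assms unfolding hermitian_def by blast
  define \<beta> where "\<beta> = restrict (\<lambda>(i,j). if i = j then inv emb (\<alpha> (i,i))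
      else if i < j then re (\<alpha> (i,j)) else im (\<alpha> (j,i))) (bch_index s)"
  have "herm_coeffs \<beta> k = \<alpha> k" if k: "k \<in> bch_index s" for k
  proof -
    obtain i j where ij: "k = (i,j)" by (cases k)
    have k': "(j,i) \<in> bch_index s" using k ij by auto
    show ?thesis
    proof (cases i j rule: linorder_cases)
      case equal
      have "\<alpha> (i,i) ^ q = \<alpha> (i,i)" using herm[OF k] ij equal by simp
      thus ?thesis using k ij equal by (simp add: herm_coeffs_def \<beta>_def emb_inv_emb)
    next
      case less
      thus ?thesis using k k' ij re_im[of "\<alpha> (i,j)"] by (simp add: herm_coeffs_def \<beta>_def)
    next
      case greater
      hence "herm_coeffs \<beta> k = (emb (re (\<alpha> (j,i))) + emb (im (\<alpha> (j,i))) * \<theta>) ^ q"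
        using k k' ij by (simp add: herm_coeffs_def \<beta>_def)
      also have "\<dots> = \<alpha> k" using re_im[of "\<alpha> (j,i)"] herm[OF k'] ij by simp
      finally show ?thesis .
    qed
  qed
  moreover have "\<beta> \<in> bch_index s \<rightarrow>\<^sub>E UNIV" unfolding \<beta>_def by simp
  ultimately show ?thesis by blast
qed

definition bch0_word :: "nat \<Rightarrow> (nat \<times> nat \<Rightarrow> 'a) \<Rightarrow> (nat \<Rightarrow> 'b) \<Rightarrow> 'a" where
  "bch0_word s \<beta> = res (proj_points 1) (\<lambda>P. inv emb (bch_form s (herm_coeffs \<beta>) P))"

lemma emb_bch0_word:
  "P \<in> proj_points 1 \<Longrightarrow> emb (bch0_word s \<beta> P) = bch_form s (herm_coeffs \<beta>) P"
  unfolding bch0_word_def res_def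
  using hermitian_form_frob[OF herm_coeffs_hermitian] by (simp add: emb_inv_emb)

lemma bch0_word_in_Bext0: "bch0_word s \<beta> \<in> Bext0 emb q s"
proof -
  have "emb \<circ> bch0_word s \<beta> = res (proj_points 1) (bch_form s (herm_coeffs \<beta>))"
    by (auto simp: fun_eq_iff res_def emb_bch0_word) (simp add: bch0_word_def res_def)
  moreover have "bch_form s (herm_coeffs \<beta>) \<in> BCH.forms s"
    unfolding bch_form_def by (rule BCH.formsI) simp
  ultimately have "emb \<circ> bch0_word s \<beta> \<in> Bext q s" unfolding Bext_forms by blast
  thus ?thesis unfolding Bext0_def by (auto simp: bch0_word_def res_def)
qed

text \<open>For s + 2 <= q the words bch0_word s beta are distinct, and they exhaust B0ext(s) because an
  F_q-valued BCH word has Hermitian coefficients.\<close>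
lemma bch0_word_inj:
  assumes sq: "s + 2 \<le> q"
  shows "inj_on (bch0_word s) (bch_index s \<rightarrow>\<^sub>E UNIV)"
proof (rule inj_onI)
  fix \<beta> \<beta>' assume \<beta>: "\<beta> \<in> bch_index s \<rightarrow>\<^sub>E UNIV" and \<beta>': "\<beta>' \<in> bch_index s \<rightarrow>\<^sub>E UNIV"
    and eq: "bch0_word s \<beta> = bch0_word s \<beta>'"
  have "bch_form s (\<lambda>k. herm_coeffs \<beta> k - herm_coeffs \<beta>' k) (pt1 t) = 0" for t
    using emb_bch0_word[OF pt1_in_P1, of s \<beta> t] emb_bch0_word[OF pt1_in_P1, of s \<beta>' t] eq
    by (simp add: bch_form_diff)
  hence "k \<in> bch_index s \<Longrightarrow> herm_coeffs \<beta> k = herm_coeffs \<beta>' k" for k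
    using bch_form_coeffs_unique[OF sq] by fastforce
  thus "\<beta> = \<beta>'" using herm_coeffs_inj[OF \<beta> \<beta>'] by blast
qed

lemma Bext0_eq_bch0_words:
  assumes sq: "s + 2 \<le> q"
  shows "Bext0 emb q s = bch0_word s ` (bch_index s \<rightarrow>\<^sub>E UNIV)"
proof (intro antisym subsetI)
  fix cw assume cw: "cw \<in> Bext0 emb q s"
  hence "emb \<circ> cw \<in> Bext q s" and outside: "\<And>P. P \<notin> proj_points 1 \<Longrightarrow> cw P = 0"
    unfolding Bext0_def by auto
  then obtain h where hc: "emb \<circ> cw = res (proj_points 1) h" and h: "h \<in> BCH.forms s"
    unfolding Bext_forms by blast
  obtain \<alpha> where h_eq: "h = bch_form s \<alpha>" using h unfolding bch_form_def by (rule BCH.formsE)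
  have cw_eq: "P \<in> proj_points 1 \<Longrightarrow> bch_form s \<alpha> P = emb (cw P)" for P
    using fun_cong[OF hc, of P] by (simp add: res_def h_eq)
  have "hermitian s \<alpha>"
    by (intro frob_fixed_hermitian[OF sq]) (simp add: cw_eq[OF pt1_in_P1] emb_frob)
  then obtain \<beta> where \<beta>: "\<beta> \<in> bch_index s \<rightarrow>\<^sub>E UNIV" "\<forall>k\<in>bch_index s. herm_coeffs \<beta> k = \<alpha> k"
    using hermitian_herm_coeffs by blast
  have "bch0_word s \<beta> = cw"
  proof
    fix P show "bch0_word s \<beta> P = cw P"
    proof (cases "P \<in> proj_points 1")
      case True
      have "emb (bch0_word s \<beta> P) = bch_form s \<alpha> P"
        using \<beta>(2) unfolding emb_bch0_word[OF True] bch_form_def by (intro sum.cong) auto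
      thus ?thesis using cw_eq[OF True] by simp
    next
      case False thus ?thesis using outside by (simp add: bch0_word_def res_def)
    qed
  qed
  thus "cw \<in> bch0_word s ` (bch_index s \<rightarrow>\<^sub>E UNIV)" using \<beta>(1) by blast
qed (use bch0_word_in_Bext0 in blast)

text \<open>Hence |B0ext(s)| = q^((s+1)^2), and |C| = q^(dim C) gives the dimension of C_E(s).\<close>
lemma card_Bext0:
  assumes "s + 2 \<le> q"
  shows "card (Bext0 emb q s) = q ^ ((s + 1) ^ 2)"
proof -
  have "card (Bext0 emb q s) = card (bch_index s \<rightarrow>\<^sub>E (UNIV :: 'a set))"
    unfolding Bext0_eq_bch0_words[OF assms] using bch0_word_inj[OF assms] by (rule card_image)
  also have "\<dots> = q ^ card (bch_index s)" by (simp add: card_PiE q_def)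
  also have "card (bch_index s) = (s + 1) ^ 2"
    by (simp add: card_cartesian_product power2_eq_square algebra_simps)
  finally show ?thesis .
qed

lemma code_dim_E:
  assumes "s + 2 \<le> q"
  shows "code_dim (eval_code 3 (elliptic_quadric a b c) s) = (s + 1) ^ 2"
proof -
  let ?C = "eval_code 3 (elliptic_quadric a b c) s"
  have "q ^ FunVS.dim ?C = card ?C"
    unfolding q_def by (rule card_subspace[OF eval_code_finite[OF finite_E] eval_code_subspace, symmetric])
  also have "\<dots> = q ^ ((s + 1) ^ 2)" using card_eval_code_eq_Bext0 card_Bext0[OF assms] by simp
  finally show ?thesis unfolding code_dim_def using q_ge2 by (simp add: power_inject_exp)
qed

end

theorem theorem3p6:
  fixes a b c :: "'a::{field,finite}"
    and emb :: "'a \<Rightarrow> 'b::{field,finite}"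
    and s :: nat
  defines "q \<equiv> card (UNIV :: 'a set)"
  assumes Qirr: "irreducible (qform_poly a b c)"
    and Fq2: "card (UNIV :: 'b set) = q ^ 2"
    and emb_hom: "\<And>x y. emb (x + y) = emb x + emb y" "\<And>x y. emb (x * y) = emb x * emb y"
      "emb 1 = 1"
    and s_bound: "s < q - 1"
  shows "perm_equiv (elliptic_quadric a b c) (eval_code 3 (elliptic_quadric a b c) s)
                    (proj_points 1 :: (nat \<Rightarrow> 'b) set) (Bext0 emb q s)
       \<and> card (elliptic_quadric a b c) = q ^ 2 + 1
       \<and> code_dim (eval_code 3 (elliptic_quadric a b c) s) = (s + 1) ^ 2
       \<and> min_dist (elliptic_quadric a b c) (eval_code 3 (elliptic_quadric a b c) s)
           = q ^ 2 + 1 - s * (q + 1)"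
proof -
  interpret E: elliptic_setup emb q a b c
    by unfold_locales (use Qirr Fq2 emb_hom in \<open>simp_all add: q_def\<close>)
  obtain \<theta> where \<theta>: "emb a * \<theta> * \<theta> + emb b * \<theta> + emb c = 0" "\<theta> \<notin> range emb"
    using E.exists_root_outside by blast
  obtain \<rho> where \<rho>: "\<rho> ^ q * \<rho> = emb a" using E.exists_norm_a by blast
  interpret P: elliptic_param emb q a b c \<theta> \<rho>
    by unfold_locales (use \<theta> \<rho> in auto)
  show ?thesis
    using P.perm_equiv_E_Bext0 P.card_E P.code_dim_E P.min_dist_E s_bound by auto
qed

end
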